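(* For every even integer $n\ge14$ there exist two connected, irregular, nonisomorphic graphs $G,H$ on $n$ vertices which are cospectral with respect to each of the adjacency matrix, the Laplacian matrix, the signless Laplacian matrix and the normalized Laplacian matrix, which satisfy $\alpha(G)=\alpha(H)$, $\omega(G)=\omega(H)$ and $\chi(G)=\chi(H)$, and for which $\vartheta(G)\ne\vartheta(H)$.
   Context: Graphs are finite, simple, undirected. For a graph with adjacency matrix $A$ and diagonal degree matrix $D$, the Laplacian is $L=D-A$, the signless Laplacian is $Q=D+A$, and the normalized Laplacian is $I-D^{-1/2}AD^{-1/2}$ (with $d_i^{-1/2}:=0$ for isolated vertices). Two graphs are cospectral with respect to a matrix type if those matrices have identical multisets of eigenvalues. $\alpha,\omega,\chi$ are the independence, clique and chromatic numbers; $\vartheta(G)$ is the Lovász theta function: the maximum of $\mathrm{Tr}(BJ)$ over positive semidefinite $B$ indexed by $V(G)$ with $\mathrm{Tr}B=1$ and $B_{i,j}=0$ for $\{i,j\}\in E(G)$, $J$ the all-ones matrix. Irregular means not all vertex degrees are equal. *)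

theory Defs
  imports "Jordan_Normal_Form.Char_Poly" "HOL-Computational_Algebra.Polynomial"
begin

definition simple_graph :: "nat \<Rightarrow> (nat \<Rightarrow> nat \<Rightarrow> bool) \<Rightarrow> bool" where
  "simple_graph n E \<longleftrightarrow>
     (\<forall>i j. E i j \<longrightarrow> i < n \<and> j < n \<and> i \<noteq> j) \<and> (\<forall>i j. E i j \<longrightarrow> E j i)"

definition degree :: "nat \<Rightarrow> (nat \<Rightarrow> nat \<Rightarrow> bool) \<Rightarrow> nat \<Rightarrow> nat" where
  "degree n E i = card {j. j < n \<and> E i j}"

definition connected_graph :: "nat \<Rightarrow> (nat \<Rightarrow> nat \<Rightarrow> bool) \<Rightarrow> bool" where
  "connected_graph n E \<longleftrightarrow> n > 0 \<and> (\<forall>i<n. \<forall>j<n. E\<^sup>*\<^sup>* i j)"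

definition irregular :: "nat \<Rightarrow> (nat \<Rightarrow> nat \<Rightarrow> bool) \<Rightarrow> bool" where
  "irregular n E \<longleftrightarrow> (\<exists>i<n. \<exists>j<n. degree n E i \<noteq> degree n E j)"

definition isomorphic :: "nat \<Rightarrow> (nat \<Rightarrow> nat \<Rightarrow> bool) \<Rightarrow> (nat \<Rightarrow> nat \<Rightarrow> bool) \<Rightarrow> bool" where
  "isomorphic n E F \<longleftrightarrow>
     (\<exists>f. bij_betw f {0..<n} {0..<n} \<and> (\<forall>i<n. \<forall>j<n. E i j \<longleftrightarrow> F (f i) (f j)))"

definition graph_adj_mat :: "nat \<Rightarrow> (nat \<Rightarrow> nat \<Rightarrow> bool) \<Rightarrow> real mat" where
  "graph_adj_mat n E = mat n n (\<lambda>(i,j). if E i j then 1 else 0)"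

definition deg_mat :: "nat \<Rightarrow> (nat \<Rightarrow> nat \<Rightarrow> bool) \<Rightarrow> real mat" where
  "deg_mat n E = mat n n (\<lambda>(i,j). if i = j then real (degree n E i) else 0)"

definition laplacian :: "nat \<Rightarrow> (nat \<Rightarrow> nat \<Rightarrow> bool) \<Rightarrow> real mat" where
  "laplacian n E = deg_mat n E - graph_adj_mat n E"

definition signless_laplacian :: "nat \<Rightarrow> (nat \<Rightarrow> nat \<Rightarrow> bool) \<Rightarrow> real mat" where
  "signless_laplacian n E = deg_mat n E + graph_adj_mat n E"

(* D^{-1/2}, with d_i^{-1/2} := 0 for isolated vertices *)
definition deg_inv_sqrt_mat :: "nat \<Rightarrow> (nat \<Rightarrow> nat \<Rightarrow> bool) \<Rightarrow> real mat" where
  "deg_inv_sqrt_mat n E = mat n n (\<lambda>(i,j). if i = j \<and> degree n E i \<noteq> 0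
       then 1 / sqrt (real (degree n E i)) else 0)"

definition normalized_laplacian :: "nat \<Rightarrow> (nat \<Rightarrow> nat \<Rightarrow> bool) \<Rightarrow> real mat" where
  "normalized_laplacian n E =
     1\<^sub>m n - deg_inv_sqrt_mat n E * graph_adj_mat n E * deg_inv_sqrt_mat n E"

definition spectrum_mset :: "real mat \<Rightarrow> complex multiset" where
  "spectrum_mset A = proots (char_poly (map_mat complex_of_real A))"

definition cospectral :: "real mat \<Rightarrow> real mat \<Rightarrow> bool" where
  "cospectral A B \<longleftrightarrow> spectrum_mset A = spectrum_mset B"

definition independence_number :: "nat \<Rightarrow> (nat \<Rightarrow> nat \<Rightarrow> bool) \<Rightarrow> nat" where
  "independence_number n E =
     Max {card S | S. S \<subseteq> {0..<n} \<and> (\<forall>i\<in>S. \<forall>j\<in>S. \<not> E i j)}"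

definition clique_number :: "nat \<Rightarrow> (nat \<Rightarrow> nat \<Rightarrow> bool) \<Rightarrow> nat" where
  "clique_number n E =
     Max {card S | S. S \<subseteq> {0..<n} \<and> (\<forall>i\<in>S. \<forall>j\<in>S. i \<noteq> j \<longrightarrow> E i j)}"

definition chromatic_number :: "nat \<Rightarrow> (nat \<Rightarrow> nat \<Rightarrow> bool) \<Rightarrow> nat" where
  "chromatic_number n E =
     (LEAST k. \<exists>c. (\<forall>i<n. c i < k) \<and> (\<forall>i<n. \<forall>j<n. E i j \<longrightarrow> c i \<noteq> c j))"

definition mat_trace :: "real mat \<Rightarrow> real" where
  "mat_trace B = (\<Sum>i<dim_row B. B $$ (i,i))"

definition psd :: "nat \<Rightarrow> real mat \<Rightarrow> bool" where
  "psd n B \<longleftrightarrow> B \<in> carrier_mat n n \<and> transpose_mat B = B \<and>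
     (\<forall>x \<in> carrier_vec n. 0 \<le> x \<bullet> (B *\<^sub>v x))"

(* Lovasz theta: maximum of Tr(BJ) over feasible B (the maximum is attained) *)
definition lovasz_theta :: "nat \<Rightarrow> (nat \<Rightarrow> nat \<Rightarrow> bool) \<Rightarrow> real" where
  "lovasz_theta n E = Sup {mat_trace (B * mat n n (\<lambda>_. 1)) | B.
      psd n B \<and> mat_trace B = 1 \<and> (\<forall>i<n. \<forall>j<n. E i j \<longrightarrow> B $$ (i,j) = 0)}"

end

theory Submission
  imports Defs
begin

(* Both graphs are cones K_1 + (C + K_(n-11)): vertex 0 is adjacent to everything, a core graph C
   lives on the vertices 1..10 and the vertices 11..n-1 form a clique.  The two cores are related by
   Godsil-McKay switching with respect to {1,2,3,4}.  These four vertices have equal degrees, so the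
   switching matrix commutes with the degree matrices and the graphs are cospectral for the adjacency,
   Laplacian, signless Laplacian and normalized Laplacian matrices.  Both cores have independence
   number 4 and are 3-colourable, which gives alpha = 5 and omega = chi = n - 10 for both graphs.
   The theta function separates them: an explicit feasible matrix shows theta >= 5.1647 for the first
   graph and an explicit dual matrix shows theta <= 5.16045 for the second, uniformly in n.  Both are
   certified in exact integer arithmetic by a Gram decomposition plus a diagonally dominant remainder.
   As theta is an isomorphism invariant, the graphs are not isomorphic. *)

section \<open>Positive semidefinite forms and their certificates\<close>

definition nonneg_form :: "nat \<Rightarrow> (nat \<Rightarrow> nat \<Rightarrow> real) \<Rightarrow> bool" where
  "nonneg_form n P \<longleftrightarrow> (\<forall>v. 0 \<le> (\<Sum>i<n. \<Sum>j<n. v i * P i j * v j))"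

definition symmetric_on :: "nat \<Rightarrow> (nat \<Rightarrow> nat \<Rightarrow> real) \<Rightarrow> bool" where
  "symmetric_on n P \<longleftrightarrow> (\<forall>i<n. \<forall>j<n. P i j = P j i)"

definition dual_psd :: "nat \<Rightarrow> (nat \<Rightarrow> nat \<Rightarrow> real) \<Rightarrow> bool" where
  "dual_psd n Y \<longleftrightarrow>
     (\<forall>P. nonneg_form n P \<longrightarrow> symmetric_on n P \<longrightarrow> 0 \<le> (\<Sum>i<n. \<Sum>j<n. P i j * Y i j))"

definition diag_dominant :: "nat \<Rightarrow> (nat \<Rightarrow> nat \<Rightarrow> real) \<Rightarrow> bool" where
  "diag_dominant n R \<longleftrightarrow> (\<forall>i<n. (\<Sum>j\<in>{..<n} - {i}. \<bar>R i j\<bar>) \<le> R i i)"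

lemma double_sum_support:
  fixes f :: "nat \<Rightarrow> nat \<Rightarrow> real"
  assumes "T \<subseteq> {..<n}" and "\<And>k l. k < n \<Longrightarrow> l < n \<Longrightarrow> k \<notin> T \<or> l \<notin> T \<Longrightarrow> f k l = 0"
  shows "(\<Sum>k<n. \<Sum>l<n. f k l) = (\<Sum>k\<in>T. \<Sum>l\<in>T. f k l)"
proof -
  have "finite T" using assms(1) finite_subset by blast
  then have "(\<Sum>k<n. \<Sum>l<n. f k l) = (\<Sum>k\<in>T. \<Sum>l<n. f k l)"
    using assms by (intro sum.mono_neutral_right) auto
  also have "\<dots> = (\<Sum>k\<in>T. \<Sum>l\<in>T. f k l)"
    using assms \<open>finite T\<close> by (intro sum.cong refl sum.mono_neutral_right) auto
  finally show ?thesis .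
qed

lemma nonneg_formD: "nonneg_form n P \<Longrightarrow> 0 \<le> (\<Sum>i<n. \<Sum>j<n. v i * P i j * v j)"
  unfolding nonneg_form_def by blast

lemma nonneg_form_diag:
  assumes "nonneg_form n P" "i < n"
  shows "0 \<le> P i i"
proof -
  let ?v = "\<lambda>k. if k = i then 1 else 0"
  have "0 \<le> (\<Sum>k<n. \<Sum>l<n. ?v k * P k l * ?v l)" by (rule nonneg_formD[OF assms(1)])
  also have "\<dots> = P i i" using assms(2) by (subst double_sum_support[of "{i}"]) auto
  finally show ?thesis .
qed

lemma nonneg_form_offdiag:
  assumes P: "nonneg_form n P" "symmetric_on n P" and ij: "i < n" "j < n"
  shows "2 * \<bar>P i j\<bar> \<le> P i i + P j j"
proof (cases "i = j")
  case True
  then show ?thesis using nonneg_form_diag[OF P(1) ij(1)] by simp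
next
  case False
  have "0 \<le> P i i + 2 * c * P i j + c\<^sup>2 * P j j" for c
  proof -
    let ?v = "\<lambda>k. if k = i then 1 else if k = j then c else 0"
    have "0 \<le> (\<Sum>k<n. \<Sum>l<n. ?v k * P k l * ?v l)" by (rule nonneg_formD[OF P(1)])
    also have "\<dots> = P i i + c * P i j + c * P j i + c\<^sup>2 * P j j"
      using ij False by (subst double_sum_support[of "{i,j}"]) (auto simp: power2_eq_square)
    finally show ?thesis using P(2) ij unfolding symmetric_on_def by simp
  qed
  from this[of 1] this[of "-1"] show ?thesis by (simp add: abs_le_iff)
qed

lemma nonneg_form_restrict:
  assumes "nonneg_form n P" "m \<le> n"
  shows "nonneg_form m P"
  unfolding nonneg_form_def
proof
  fix v :: "nat \<Rightarrow> real"
  let ?w = "\<lambda>k. if k < m then v k else 0"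
  have "0 \<le> (\<Sum>i<n. \<Sum>j<n. ?w i * P i j * ?w j)" by (rule nonneg_formD[OF assms(1)])
  also have "\<dots> = (\<Sum>i<m. \<Sum>j<m. ?w i * P i j * ?w j)"
    using assms(2) by (intro double_sum_support) auto
  also have "\<dots> = (\<Sum>i<m. \<Sum>j<m. v i * P i j * v j)" by simp
  finally show "0 \<le> (\<Sum>i<m. \<Sum>j<m. v i * P i j * v j)" .
qed

lemma nonneg_form_rank_one: "nonneg_form n (\<lambda>i j. z i * z j)"
  unfolding nonneg_form_def
proof
  fix v :: "nat \<Rightarrow> real"
  have "(\<Sum>i<n. \<Sum>j<n. v i * (z i * z j) * v j) = (\<Sum>i<n. v i * z i)\<^sup>2"
    by (simp add: power2_eq_square sum_product mult_ac)
  then show "0 \<le> (\<Sum>i<n. \<Sum>j<n. v i * (z i * z j) * v j)" by simp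
qed

lemma dual_psd_rank_one: "dual_psd n (\<lambda>i j. z i * z j)"
  unfolding dual_psd_def
proof (intro allI impI)
  fix P assume "nonneg_form n P"
  then have "0 \<le> (\<Sum>i<n. \<Sum>j<n. z i * P i j * z j)" by (rule nonneg_formD)
  then show "0 \<le> (\<Sum>i<n. \<Sum>j<n. P i j * (z i * z j))" by (simp add: mult_ac)
qed

lemma nonneg_form_if_dual_psd:
  assumes "dual_psd n Y"
  shows "nonneg_form n Y"
  unfolding nonneg_form_def
proof
  fix v
  have "symmetric_on n (\<lambda>i j. v i * v j)" unfolding symmetric_on_def by simp
  then have "0 \<le> (\<Sum>i<n. \<Sum>j<n. v i * v j * Y i j)"
    using assms nonneg_form_rank_one unfolding dual_psd_def by blast
  then show "0 \<le> (\<Sum>i<n. \<Sum>j<n. v i * Y i j * v j)" by (simp add: mult_ac)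
qed

lemma dual_psd_nonneg_combination:
  assumes "dual_psd n Y" "dual_psd n Z" "0 \<le> a" "0 \<le> b"
  shows "dual_psd n (\<lambda>i j. a * Y i j + b * Z i j)"
  unfolding dual_psd_def
proof (intro allI impI)
  fix P assume P: "nonneg_form n P" "symmetric_on n P"
  have "(\<Sum>i<n. \<Sum>j<n. P i j * (a * Y i j + b * Z i j))
      = a * (\<Sum>i<n. \<Sum>j<n. P i j * Y i j) + b * (\<Sum>i<n. \<Sum>j<n. P i j * Z i j)"
    by (simp add: distrib_left sum.distrib sum_distrib_left mult.left_commute)
  also have "0 \<le> \<dots>"
    using assms P unfolding dual_psd_def by (intro add_nonneg_nonneg mult_nonneg_nonneg) auto
  finally show "0 \<le> (\<Sum>i<n. \<Sum>j<n. P i j * (a * Y i j + b * Z i j))" .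
qed

lemma dual_psd_gram: "dual_psd n (\<lambda>i j. \<Sum>k\<in>K. w k i * w k j)"
  unfolding dual_psd_def
proof (intro allI impI)
  fix P assume P: "nonneg_form n P"
  have "0 \<le> (\<Sum>k\<in>K. \<Sum>i<n. \<Sum>j<n. w k i * P i j * w k j)"
    by (rule sum_nonneg) (rule nonneg_formD[OF P])
  also have "\<dots> = (\<Sum>i<n. \<Sum>k\<in>K. \<Sum>j<n. w k i * P i j * w k j)" by (rule sum.swap)
  also have "\<dots> = (\<Sum>i<n. \<Sum>j<n. \<Sum>k\<in>K. w k i * P i j * w k j)" by (intro sum.cong refl sum.swap)
  also have "\<dots> = (\<Sum>i<n. \<Sum>j<n. P i j * (\<Sum>k\<in>K. w k i * w k j))"
    by (simp add: sum_distrib_left mult.commute mult.left_commute)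
  finally show "0 \<le> (\<Sum>i<n. \<Sum>j<n. P i j * (\<Sum>k\<in>K. w k i * w k j))" .
qed

(* Off the diagonal 2 |P i j| <= P i i + P j j, so the pairing is at least the sum over i of P i i
   times the excess of R i i over the rest of its row. *)
lemma dual_psd_diag_dominant:
  assumes R: "symmetric_on n R" "diag_dominant n R"
  shows "dual_psd n R"
  unfolding dual_psd_def
proof (intro allI impI)
  fix P assume P: "nonneg_form n P" "symmetric_on n P"
  define a where "a i j = (if i = j then 0 else \<bar>R i j\<bar>)" for i j
  have row: "(\<Sum>j<n. a i j) = (\<Sum>j\<in>{..<n} - {i}. \<bar>R i j\<bar>)" for i
    unfolding a_def by (rule sum.mono_neutral_cong_right) auto
  have swap: "(\<Sum>i<n. \<Sum>j<n. P j j * a i j) = (\<Sum>i<n. \<Sum>j<n. P i i * a i j)"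
    using R(1) by (subst sum.swap) (auto simp: a_def symmetric_on_def intro!: sum.cong)
  have lower: "(if i = j then P i i * R i i else 0) - (P i i * a i j + P j j * a i j) / 2 \<le> P i j * R i j"
    if "i < n" "j < n" for i j
  proof (cases "i = j")
    case False
    have "- (P i j * R i j) \<le> \<bar>P i j\<bar> * \<bar>R i j\<bar>"
      using abs_ge_minus_self[of "P i j * R i j"] by (simp add: abs_mult)
    also have "\<dots> \<le> (P i i + P j j) / 2 * \<bar>R i j\<bar>"
      using nonneg_form_offdiag[OF P that] by (intro mult_right_mono) auto
    also have "\<dots> = (P i i * a i j + P j j * a i j) / 2"
      using False by (simp add: a_def field_simps)
    finally have "- (P i j * R i j) \<le> (P i i * a i j + P j j * a i j) / 2" .
    moreover have "(if i = j then P i i * R i i else 0) = 0" using False by simp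
    ultimately show ?thesis by linarith
  qed (simp add: a_def)
  have diag: "(\<Sum>i<n. \<Sum>j<n. if i = j then P i i * R i i else 0) = (\<Sum>i<n. P i i * R i i)"
    by (intro sum.cong refl) simp
  have "(\<Sum>i<n. \<Sum>j<n. (P i i * a i j + P j j * a i j) / 2) = (\<Sum>i<n. \<Sum>j<n. P i i * a i j)"
    using swap by (simp add: sum.distrib add_divide_distrib flip: sum_divide_distrib)
  then have "(\<Sum>i<n. P i i * (R i i - (\<Sum>j<n. a i j)))
      = (\<Sum>i<n. \<Sum>j<n. (if i = j then P i i * R i i else 0) - (P i i * a i j + P j j * a i j) / 2)"
    by (simp add: diag sum_subtractf right_diff_distrib sum_distrib_left)
  also have "\<dots> \<le> (\<Sum>i<n. \<Sum>j<n. P i j * R i j)"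
    using lower by (intro sum_mono) auto
  finally have "(\<Sum>i<n. P i i * (R i i - (\<Sum>j<n. a i j))) \<le> (\<Sum>i<n. \<Sum>j<n. P i j * R i j)" .
  moreover have "0 \<le> (\<Sum>i<n. P i i * (R i i - (\<Sum>j<n. a i j)))"
    using R(2) nonneg_form_diag[OF P(1)] unfolding diag_dominant_def row
    by (intro sum_nonneg mult_nonneg_nonneg) auto
  ultimately show "0 \<le> (\<Sum>i<n. \<Sum>j<n. P i j * R i j)" by linarith
qed

lemma dual_psd_extend:
  assumes "dual_psd m Y" "m \<le> n" "\<And>i j. m \<le> i \<or> m \<le> j \<Longrightarrow> Y i j = 0"
  shows "dual_psd n Y"
  unfolding dual_psd_def
proof (intro allI impI)
  fix P assume P: "nonneg_form n P" "symmetric_on n P"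
  have "nonneg_form m P" "symmetric_on m P"
    using nonneg_form_restrict[OF P(1) assms(2)] P(2) assms(2) unfolding symmetric_on_def by auto
  then have "0 \<le> (\<Sum>i<m. \<Sum>j<m. P i j * Y i j)" using assms(1) unfolding dual_psd_def by blast
  also have "\<dots> = (\<Sum>i<n. \<Sum>j<n. P i j * Y i j)"
    using assms(2,3) by (subst double_sum_support[of "{..<m}"]) auto
  finally show "0 \<le> (\<Sum>i<n. \<Sum>j<n. P i j * Y i j)" .
qed

(* Matrices are stored as lists of rows; entries outside the lists read as 0. *)
definition entry :: "int list list \<Rightarrow> nat \<Rightarrow> nat \<Rightarrow> int" where
  "entry M i j = (if i < length M \<and> j < length (M ! i) then M ! i ! j else 0)"

(* A certificate for M is a M = V^T V + R with a > 0 and a diagonally dominant residual R, which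
   makes M positive semidefinite. *)
definition certificate_residual :: "int \<Rightarrow> int list list \<Rightarrow> int list list \<Rightarrow> nat \<Rightarrow> nat \<Rightarrow> int" where
  "certificate_residual a M V i j =
     a * entry M i j - sum_list (map (\<lambda>k. entry V k i * entry V k j) [0..<length V])"

definition psd_certificate :: "nat \<Rightarrow> int \<Rightarrow> int list list \<Rightarrow> int list list \<Rightarrow> bool" where
  "psd_certificate N a M V \<longleftrightarrow>
     0 < a \<and> length M = N \<and> list_all (\<lambda>row. length row = N) M \<and>
     list_all (\<lambda>i. list_all (\<lambda>j. entry M i j = entry M j i) [0..<N]) [0..<N] \<and>
     list_all (\<lambda>i. sum_list (map (\<lambda>j. if j = i then 0 else \<bar>certificate_residual a M V i j\<bar>) [0..<N])
                   \<le> certificate_residual a M V i i) [0..<N]"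

lemma entry_eq_0:
  assumes "length M = N" "list_all (\<lambda>row. length row = N) M" "N \<le> i \<or> N \<le> j"
  shows "entry M i j = 0"
  using assms unfolding entry_def list_all_iff by auto

lemma psd_certificate_entry_eq_0:
  "psd_certificate N a M V \<Longrightarrow> N \<le> i \<or> N \<le> j \<Longrightarrow> entry M i j = 0"
  unfolding psd_certificate_def using entry_eq_0 by blast

lemma psd_certificate_symmetric:
  assumes "psd_certificate N a M V"
  shows "entry M i j = entry M j i"
proof (cases "i < N \<and> j < N")
  case True
  then show ?thesis using assms unfolding psd_certificate_def list_all_iff by auto
next
  case False
  then show ?thesis using psd_certificate_entry_eq_0[OF assms] by (metis not_le)
qed

lemma psd_certificate_dual_psd:
  assumes cert: "psd_certificate N a M V" and "N \<le> n"
  shows "dual_psd n (\<lambda>i j. real_of_int (entry M i j))"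
proof -
  define R where "R i j = real_of_int (certificate_residual a M V i j)" for i j
  define G where "G i j = (\<Sum>k\<in>{..<length V}. real_of_int (entry V k i) * real_of_int (entry V k j))"
    for i j
  have a: "0 < a" and shape: "length M = N" "list_all (\<lambda>row. length row = N) M"
    and sym: "\<forall>i<N. \<forall>j<N. entry M i j = entry M j i"
    and dd: "\<forall>i<N. (\<Sum>j<N. if j = i then 0 else \<bar>certificate_residual a M V i j\<bar>)
                    \<le> certificate_residual a M V i i"
    using cert unfolding psd_certificate_def list_all_iff
    by (auto simp: interv_sum_list_conv_sum_set_nat atLeast0LessThan)
  have decomposition: "real_of_int (entry M i j) = (1 / a) * G i j + (1 / a) * R i j" for i j
    using a unfolding R_def G_def certificate_residual_def
    by (simp add: interv_sum_list_conv_sum_set_nat atLeast0LessThan of_int_sum field_simps)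
  have "symmetric_on N R"
    using sym unfolding symmetric_on_def R_def certificate_residual_def by (simp add: mult.commute)
  moreover have "diag_dominant N R"
  proof -
    have "(\<Sum>j\<in>{..<N} - {i}. \<bar>R i j\<bar>) = real_of_int (\<Sum>j<N. if j = i then 0 else \<bar>certificate_residual a M V i j\<bar>)"
      for i
      unfolding R_def of_int_sum by (rule sum.mono_neutral_cong_left) auto
    then show ?thesis using dd unfolding diag_dominant_def R_def by (simp del: of_int_sum)
  qed
  ultimately have "dual_psd N R" by (rule dual_psd_diag_dominant)
  then have "dual_psd N (\<lambda>i j. real_of_int (entry M i j))"
    unfolding decomposition G_def
    using dual_psd_gram[where K = "{..<length V}" and w = "\<lambda>k i. real_of_int (entry V k i)"] a
    by (intro dual_psd_nonneg_combination) auto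
  then show ?thesis using assms(2) by (rule dual_psd_extend) (simp add: entry_eq_0[OF shape])
qed

section \<open>The Lovasz theta function\<close>

definition theta_feasible :: "nat \<Rightarrow> (nat \<Rightarrow> nat \<Rightarrow> bool) \<Rightarrow> real mat \<Rightarrow> bool" where
  "theta_feasible n E B \<longleftrightarrow>
     psd n B \<and> mat_trace B = 1 \<and> (\<forall>i<n. \<forall>j<n. E i j \<longrightarrow> B $$ (i,j) = 0)"

definition entry_sum :: "nat \<Rightarrow> real mat \<Rightarrow> real" where
  "entry_sum n B = (\<Sum>i<n. \<Sum>j<n. B $$ (i,j))"

lemma mat_trace_carrier: "B \<in> carrier_mat n n \<Longrightarrow> mat_trace B = (\<Sum>i<n. B $$ (i,i))"
  unfolding mat_trace_def by simp

lemma quadratic_form_mat: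
  assumes "B \<in> carrier_mat n n" "x \<in> carrier_vec n"
  shows "x \<bullet> (B *\<^sub>v x) = (\<Sum>i<n. \<Sum>j<n. x $ i * B $$ (i,j) * x $ j)"
  using assms
  by (auto simp: scalar_prod_def atLeast0LessThan sum_distrib_left mult_ac intro!: sum.cong)

lemma psd_iff_nonneg_form:
  "psd n B \<longleftrightarrow>
     B \<in> carrier_mat n n \<and> symmetric_on n (\<lambda>i j. B $$ (i,j)) \<and> nonneg_form n (\<lambda>i j. B $$ (i,j))"
proof -
  have sym: "transpose_mat B = B \<longleftrightarrow> symmetric_on n (\<lambda>i j. B $$ (i,j))" if B: "B \<in> carrier_mat n n"
  proof
    assume tr: "transpose_mat B = B"
    have "B $$ (i,j) = B $$ (j,i)" if "i < n" "j < n" for i j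
      using arg_cong[OF tr, of "\<lambda>M. M $$ (i,j)"] B that by simp
    then show "symmetric_on n (\<lambda>i j. B $$ (i,j))" unfolding symmetric_on_def by blast
  next
    assume "symmetric_on n (\<lambda>i j. B $$ (i,j))"
    then show "transpose_mat B = B" using B by (intro eq_matI) (auto simp: symmetric_on_def)
  qed
  have form: "(\<forall>x \<in> carrier_vec n. 0 \<le> x \<bullet> (B *\<^sub>v x)) \<longleftrightarrow> nonneg_form n (\<lambda>i j. B $$ (i,j))"
    if B: "B \<in> carrier_mat n n"
  proof
    assume psd: "\<forall>x \<in> carrier_vec n. 0 \<le> x \<bullet> (B *\<^sub>v x)"
    have "0 \<le> (\<Sum>i<n. \<Sum>j<n. v i * B $$ (i,j) * v j)" for v
      using psd[rule_format, of "vec n v"] quadratic_form_mat[OF B, of "vec n v"] by simp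
    then show "nonneg_form n (\<lambda>i j. B $$ (i,j))" unfolding nonneg_form_def by blast
  next
    assume "nonneg_form n (\<lambda>i j. B $$ (i,j))"
    then show "\<forall>x \<in> carrier_vec n. 0 \<le> x \<bullet> (B *\<^sub>v x)"
      using quadratic_form_mat[OF B] nonneg_formD by simp
  qed
  show ?thesis unfolding psd_def using sym form by blast
qed

lemma entry_sum_le_dim:
  assumes "theta_feasible n E B"
  shows "entry_sum n B \<le> n"
proof -
  have B: "B \<in> carrier_mat n n" "symmetric_on n (\<lambda>i j. B $$ (i,j))" "nonneg_form n (\<lambda>i j. B $$ (i,j))"
    and tr: "(\<Sum>i<n. B $$ (i,i)) = 1"
    using assms mat_trace_carrier unfolding theta_feasible_def psd_iff_nonneg_form by auto
  have "B $$ (i,j) \<le> (B $$ (i,i) + B $$ (j,j)) / 2" if "i < n" "j < n" for i j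
    using nonneg_form_offdiag[OF B(3,2) that] by (simp add: abs_le_iff)
  then have "entry_sum n B \<le> (\<Sum>i<n. \<Sum>j<n. (B $$ (i,i) + B $$ (j,j)) / 2)"
    unfolding entry_sum_def by (intro sum_mono) auto
  also have "\<dots> = (real n * 1 + real n * 1) / 2"
    by (simp add: sum.distrib add_divide_distrib sum_divide_distrib[symmetric] tr
        flip: sum_distrib_left)
  finally show ?thesis by simp
qed

lemma theta_feasible_scaled_identity:
  assumes "0 < n" "\<forall>i<n. \<not> E i i"
  shows "theta_feasible n E (mat n n (\<lambda>(i,j). if i = j then 1 / real n else 0))"
    (is "theta_feasible n E ?B")
proof -
  have "nonneg_form n (\<lambda>i j. ?B $$ (i,j))"
    unfolding nonneg_form_def
  proof
    fix v :: "nat \<Rightarrow> real"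
    have "(\<Sum>j<n. v i * ?B $$ (i,j) * v j) = (v i)\<^sup>2 / real n" if "i < n" for i
    proof -
      have "(\<Sum>j<n. v i * ?B $$ (i,j) * v j) = (\<Sum>j<n. if j = i then (v i)\<^sup>2 / real n else 0)"
        using that by (intro sum.cong) (auto simp: power2_eq_square)
      then show ?thesis using that by simp
    qed
    then have "(\<Sum>i<n. \<Sum>j<n. v i * ?B $$ (i,j) * v j) = (\<Sum>i<n. (v i)\<^sup>2 / real n)"
      by simp
    then show "0 \<le> (\<Sum>i<n. \<Sum>j<n. v i * ?B $$ (i,j) * v j)" by (simp add: sum_nonneg)
  qed
  moreover have "mat_trace ?B = 1" using assms(1) by (simp add: mat_trace_carrier[of _ n])
  ultimately show ?thesis
    using assms(2) unfolding theta_feasible_def psd_iff_nonneg_form symmetric_on_def by auto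
qed

lemma lovasz_theta_eq_Sup: "lovasz_theta n E = Sup (entry_sum n ` {B. theta_feasible n E B})"
proof -
  have "mat_trace (B * mat n n (\<lambda>_. 1)) = entry_sum n B" if "B \<in> carrier_mat n n" for B
    using that unfolding mat_trace_def entry_sum_def
    by (auto simp: scalar_prod_def atLeast0LessThan intro!: sum.cong)
  then have "(\<lambda>B. mat_trace (B * mat n n (\<lambda>_. 1))) ` {B. theta_feasible n E B}
      = entry_sum n ` {B. theta_feasible n E B}"
    by (intro image_cong refl) (simp add: theta_feasible_def psd_def)
  moreover have "{mat_trace (B * mat n n (\<lambda>_. 1)) | B. psd n B \<and> mat_trace B = 1 \<and>
        (\<forall>i<n. \<forall>j<n. E i j \<longrightarrow> B $$ (i,j) = 0)}
      = (\<lambda>B. mat_trace (B * mat n n (\<lambda>_. 1))) ` {B. theta_feasible n E B}"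
    unfolding theta_feasible_def by blast
  ultimately show ?thesis unfolding lovasz_theta_def by simp
qed

lemma lovasz_theta_ge:
  assumes "theta_feasible n E B"
  shows "entry_sum n B \<le> lovasz_theta n E"
proof -
  have "bdd_above (entry_sum n ` {B. theta_feasible n E B})"
    by (intro bdd_aboveI2[where M = "real n"]) (auto intro: entry_sum_le_dim)
  then show ?thesis
    unfolding lovasz_theta_eq_Sup using assms by (intro cSup_upper) auto
qed

lemma lovasz_theta_le:
  assumes "0 < n" "\<forall>i<n. \<not> E i i" "\<And>B. theta_feasible n E B \<Longrightarrow> entry_sum n B \<le> T"
  shows "lovasz_theta n E \<le> T"
  unfolding lovasz_theta_eq_Sup
  using assms theta_feasible_scaled_identity[of n E, OF assms(1,2)] by (intro cSup_least) auto

lemma theta_feasible_normalize: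
  assumes M: "nonneg_form n M" "symmetric_on n M" and edges: "\<forall>i<n. \<forall>j<n. E i j \<longrightarrow> M i j = 0"
    and c: "c = (\<Sum>i<n. M i i)" "0 < c"
  shows "theta_feasible n E (mat n n (\<lambda>(i,j). M i j / c))" (is "theta_feasible n E ?B")
    and "entry_sum n (mat n n (\<lambda>(i,j). M i j / c)) = (\<Sum>i<n. \<Sum>j<n. M i j) / c"
proof -
  have "nonneg_form n (\<lambda>i j. ?B $$ (i,j))"
    unfolding nonneg_form_def
  proof
    fix v :: "nat \<Rightarrow> real"
    have "(\<Sum>i<n. \<Sum>j<n. v i * ?B $$ (i,j) * v j) = (\<Sum>i<n. \<Sum>j<n. v i * M i j * v j) / c"
      by (simp add: sum_divide_distrib)
    then show "0 \<le> (\<Sum>i<n. \<Sum>j<n. v i * ?B $$ (i,j) * v j)"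
      using nonneg_formD[OF M(1)] c(2) by simp
  qed
  moreover have "mat_trace ?B = 1"
    using c by (simp add: mat_trace_carrier[of _ n] sum_divide_distrib[symmetric])
  ultimately show "theta_feasible n E ?B"
    using M(2) edges unfolding theta_feasible_def psd_iff_nonneg_form symmetric_on_def by auto
  show "entry_sum n ?B = (\<Sum>i<n. \<Sum>j<n. M i j) / c"
    unfolding entry_sum_def by (simp add: sum_divide_distrib)
qed

lemma entry_sum_le_by_duality:
  assumes B: "theta_feasible n E B" and Z: "dual_psd n Z"
    and slack: "\<forall>i<n. \<forall>j<n. E i j \<or> Z i j = (if i = j then T else 0) - 1"
  shows "entry_sum n B \<le> T"
proof -
  have Bc: "B \<in> carrier_mat n n" and tr: "(\<Sum>i<n. B $$ (i,i)) = 1"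
    and edges: "\<And>i j. i < n \<Longrightarrow> j < n \<Longrightarrow> E i j \<Longrightarrow> B $$ (i,j) = 0"
    using B mat_trace_carrier unfolding theta_feasible_def psd_def by auto
  have "0 \<le> (\<Sum>i<n. \<Sum>j<n. B $$ (i,j) * Z i j)"
    using Z B unfolding dual_psd_def theta_feasible_def psd_iff_nonneg_form by blast
  also have "\<dots> = (\<Sum>i<n. \<Sum>j<n. (if i = j then T * B $$ (i,i) else 0) - B $$ (i,j))"
  proof (intro sum.cong refl)
    fix i j assume ij: "i \<in> {..<n}" "j \<in> {..<n}"
    then have "E i j \<or> Z i j = (if i = j then T else 0) - 1" using slack by auto
    then show "B $$ (i,j) * Z i j = (if i = j then T * B $$ (i,i) else 0) - B $$ (i,j)"
    proof
      assume "E i j"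
      then show ?thesis using edges ij by auto
    next
      assume Zij: "Z i j = (if i = j then T else 0) - 1"
      show ?thesis unfolding Zij by (cases "i = j") (simp_all add: algebra_simps)
    qed
  qed
  also have "\<dots> = T - entry_sum n B"
    by (simp add: sum_subtractf entry_sum_def tr flip: sum_distrib_left)
  finally show ?thesis by simp
qed

lemma theta_feasible_pullback:
  assumes f: "bij_betw f {..<n} {..<n}" and hom: "\<forall>i<n. \<forall>j<n. G i j \<longrightarrow> H (f i) (f j)"
    and B: "theta_feasible n H B"
  defines "B' \<equiv> mat n n (\<lambda>(i,j). B $$ (f i, f j))"
  shows "theta_feasible n G B'" and "entry_sum n B' = entry_sum n B"
proof -
  have Bpsd: "B \<in> carrier_mat n n" "symmetric_on n (\<lambda>i j. B $$ (i,j))"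
      "nonneg_form n (\<lambda>i j. B $$ (i,j))"
    and tr: "(\<Sum>i<n. B $$ (i,i)) = 1"
    and edges: "\<And>i j. i < n \<Longrightarrow> j < n \<Longrightarrow> H i j \<Longrightarrow> B $$ (i,j) = 0"
    using B mat_trace_carrier unfolding theta_feasible_def psd_iff_nonneg_form by auto
  have fn: "f i < n" if "i < n" for i using f that by (auto simp: bij_betw_def)
  have reindex: "(\<Sum>i<n. \<phi> (f i)) = (\<Sum>k<n. \<phi> k)" for \<phi> :: "nat \<Rightarrow> real"
    by (rule sum.reindex_bij_betw[OF f])
  define g where "g = inv_into {..<n} f"
  have gf: "g (f i) = i" if "i < n" for i
    using f that unfolding g_def bij_betw_def by (simp add: inv_into_f_f)
  have "nonneg_form n (\<lambda>i j. B' $$ (i,j))"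
    unfolding nonneg_form_def
  proof
    fix v :: "nat \<Rightarrow> real"
    have "(\<Sum>i<n. \<Sum>j<n. v i * B' $$ (i,j) * v j)
        = (\<Sum>i<n. \<Sum>j<n. v (g (f i)) * B $$ (f i, f j) * v (g (f j)))"
      by (intro sum.cong refl) (simp add: B'_def gf)
    also have "\<dots> = (\<Sum>k<n. \<Sum>j<n. v (g k) * B $$ (k, f j) * v (g (f j)))"
      by (rule reindex)
    also have "\<dots> = (\<Sum>k<n. \<Sum>l<n. v (g k) * B $$ (k,l) * v (g l))"
      by (intro sum.cong refl reindex)
    finally show "0 \<le> (\<Sum>i<n. \<Sum>j<n. v i * B' $$ (i,j) * v j)"
      using nonneg_formD[OF Bpsd(3)] by simp
  qed
  moreover have "symmetric_on n (\<lambda>i j. B' $$ (i,j))"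
    using Bpsd(2) fn unfolding symmetric_on_def B'_def by simp
  moreover have "mat_trace B' = 1"
    using tr reindex[of "\<lambda>k. B $$ (k,k)"] by (simp add: mat_trace_carrier[of _ n] B'_def)
  moreover have "B' $$ (i,j) = 0" if "i < n" "j < n" "G i j" for i j
    using edges[OF fn fn] hom that by (simp add: B'_def)
  ultimately show "theta_feasible n G B'"
    unfolding theta_feasible_def psd_iff_nonneg_form B'_def by auto
  have "entry_sum n B' = (\<Sum>i<n. \<Sum>j<n. B $$ (f i, f j))"
    unfolding entry_sum_def B'_def by simp
  also have "\<dots> = (\<Sum>k<n. \<Sum>j<n. B $$ (k, f j))" by (rule reindex)
  also have "\<dots> = entry_sum n B" unfolding entry_sum_def by (intro sum.cong refl reindex)
  finally show "entry_sum n B' = entry_sum n B" .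
qed

lemma isomorphic_sym:
  assumes "isomorphic n G H"
  shows "isomorphic n H G"
proof -
  obtain f where f: "bij_betw f {0..<n} {0..<n}" and iff: "\<forall>i<n. \<forall>j<n. G i j \<longleftrightarrow> H (f i) (f j)"
    using assms unfolding isomorphic_def by blast
  define g where "g = inv_into {0..<n} f"
  have g: "bij_betw g {0..<n} {0..<n}" unfolding g_def by (rule bij_betw_inv_into[OF f])
  have "H i j \<longleftrightarrow> G (g i) (g j)" if "i < n" "j < n" for i j
  proof -
    have "g i < n" "g j < n" "f (g i) = i" "f (g j) = j"
      using g f that unfolding g_def by (auto simp: bij_betw_def f_inv_into_f)
    then show ?thesis using iff by metis
  qed
  then show ?thesis unfolding isomorphic_def using g by blast
qed

lemma isomorphic_lovasz_theta:
  assumes "isomorphic n G H"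
  shows "lovasz_theta n G = lovasz_theta n H"
proof -
  have values_sub: "entry_sum n ` {B. theta_feasible n H' B} \<subseteq> entry_sum n ` {B. theta_feasible n G' B}"
    if iso: "isomorphic n G' H'" for G' H'
  proof
    fix t assume "t \<in> entry_sum n ` {B. theta_feasible n H' B}"
    then obtain B where B: "theta_feasible n H' B" "t = entry_sum n B" by blast
    obtain f where f: "bij_betw f {..<n} {..<n}" "\<forall>i<n. \<forall>j<n. G' i j \<longrightarrow> H' (f i) (f j)"
      using iso unfolding isomorphic_def atLeast0LessThan by blast
    show "t \<in> entry_sum n ` {B. theta_feasible n G' B}"
      using theta_feasible_pullback[OF f B(1)] B(2) by (intro image_eqI) auto
  qed
  have "entry_sum n ` {B. theta_feasible n G B} = entry_sum n ` {B. theta_feasible n H B}"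
    using values_sub[OF isomorphic_sym[OF assms]] values_sub[OF assms] by (rule subset_antisym)
  then show ?thesis unfolding lovasz_theta_eq_Sup by simp
qed

section \<open>Godsil-McKay switching\<close>

definition gm_matrix :: "nat \<Rightarrow> nat set \<Rightarrow> real mat" where
  "gm_matrix n S = mat n n (\<lambda>(i,j).
     if i \<in> S \<and> j \<in> S then 2 / card S - (if i = j then 1 else 0) else if i = j then 1 else 0)"

lemma gm_matrix_carrier: "gm_matrix n S \<in> carrier_mat n n"
  unfolding gm_matrix_def by simp

lemma sum_lessThan_if_mem:
  fixes f :: "nat \<Rightarrow> 'a::comm_monoid_add"
  shows "S \<subseteq> {..<n} \<Longrightarrow> (\<Sum>k<n. if k \<in> S then f k else 0) = sum f S"
  by (rule sum.mono_neutral_cong_right) auto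

lemma gm_matrix_mult_left:
  assumes A: "A \<in> carrier_mat n n" and S: "S \<subseteq> {..<n}" and ij: "i < n" "j < n"
  shows "(gm_matrix n S * A) $$ (i,j) =
    (if i \<in> S then 2 / card S * (\<Sum>l\<in>S. A $$ (l,j)) - A $$ (i,j) else A $$ (i,j))"
proof -
  have prod: "(gm_matrix n S * A) $$ (i,j) = (\<Sum>k<n. gm_matrix n S $$ (i,k) * A $$ (k,j))"
    using A ij gm_matrix_carrier[of n S] by (simp add: scalar_prod_def atLeast0LessThan)
  show ?thesis
  proof (cases "i \<in> S")
    case True
    have "(\<Sum>k<n. gm_matrix n S $$ (i,k) * A $$ (k,j))
        = (\<Sum>k<n. (if k \<in> S then 2 / card S * A $$ (k,j) else 0) - (if k = i then A $$ (i,j) else 0))"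
      using True ij by (intro sum.cong refl) (auto simp: gm_matrix_def algebra_simps)
    also have "\<dots> = 2 / card S * (\<Sum>l\<in>S. A $$ (l,j)) - A $$ (i,j)"
      using S ij by (simp add: sum_subtractf sum_lessThan_if_mem sum_distrib_left)
    finally show ?thesis using True prod by simp
  next
    case False
    have "(\<Sum>k<n. gm_matrix n S $$ (i,k) * A $$ (k,j)) = (\<Sum>k<n. if k = i then A $$ (i,j) else 0)"
      using False ij by (intro sum.cong refl) (auto simp: gm_matrix_def)
    then show ?thesis using False prod ij by simp
  qed
qed

lemma gm_matrix_mult_right:
  assumes A: "A \<in> carrier_mat n n" and S: "S \<subseteq> {..<n}" and ij: "i < n" "j < n"
  shows "(A * gm_matrix n S) $$ (i,j) =
    (if j \<in> S then 2 / card S * (\<Sum>l\<in>S. A $$ (i,l)) - A $$ (i,j) else A $$ (i,j))"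
proof -
  have prod: "(A * gm_matrix n S) $$ (i,j) = (\<Sum>k<n. A $$ (i,k) * gm_matrix n S $$ (k,j))"
    using A ij gm_matrix_carrier[of n S] by (simp add: scalar_prod_def atLeast0LessThan)
  show ?thesis
  proof (cases "j \<in> S")
    case True
    have "(\<Sum>k<n. A $$ (i,k) * gm_matrix n S $$ (k,j))
        = (\<Sum>k<n. (if k \<in> S then 2 / card S * A $$ (i,k) else 0) - (if k = j then A $$ (i,j) else 0))"
      using True ij by (intro sum.cong refl) (auto simp: gm_matrix_def algebra_simps)
    also have "\<dots> = 2 / card S * (\<Sum>l\<in>S. A $$ (i,l)) - A $$ (i,j)"
      using S ij by (simp add: sum_subtractf sum_lessThan_if_mem sum_distrib_left)
    finally show ?thesis using True prod by simp
  next
    case False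
    have "(\<Sum>k<n. A $$ (i,k) * gm_matrix n S $$ (k,j)) = (\<Sum>k<n. if k = j then A $$ (i,j) else 0)"
      using False ij by (intro sum.cong refl) (auto simp: gm_matrix_def)
    then show ?thesis using False prod ij by simp
  qed
qed

lemma gm_matrix_involution:
  assumes S: "S \<subseteq> {..<n}" "S \<noteq> {}"
  shows "gm_matrix n S * gm_matrix n S = 1\<^sub>m n"
proof (rule eq_matI)
  fix i j assume "i < dim_row (1\<^sub>m n)" "j < dim_col (1\<^sub>m n)"
  then have ij: "i < n" "j < n" by auto
  have fin: "finite S" "card S \<noteq> 0" using S finite_subset by (auto simp: card_eq_0_iff)
  have column: "(\<Sum>l\<in>S. gm_matrix n S $$ (l,j)) = (if j \<in> S then 1 else 0)"
  proof -
    have "(\<Sum>l\<in>S. gm_matrix n S $$ (l,j)) = (\<Sum>l\<in>S. (if j \<in> S then 2 / card S else 0) - (if l = j then 1 else 0))"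
      using S ij by (intro sum.cong refl) (auto simp: gm_matrix_def)
    also have "\<dots> = (if j \<in> S then 1 else 0)"
      using fin by (simp add: sum_subtractf)
    finally show ?thesis .
  qed
  show "(gm_matrix n S * gm_matrix n S) $$ (i,j) = 1\<^sub>m n $$ (i,j)"
    using ij S fin unfolding gm_matrix_mult_left[OF gm_matrix_carrier S(1) ij] column
    by (auto simp: gm_matrix_def)
qed (simp_all add: gm_matrix_def)

lemma gm_matrix_commute_diagonal:
  assumes D: "D \<in> carrier_mat n n" "\<And>i j. i < n \<Longrightarrow> j < n \<Longrightarrow> i \<noteq> j \<Longrightarrow> D $$ (i,j) = 0"
    and const: "\<And>i j. i \<in> S \<Longrightarrow> j \<in> S \<Longrightarrow> D $$ (i,i) = D $$ (j,j)"
    and S: "S \<subseteq> {..<n}"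
  shows "gm_matrix n S * D = D * gm_matrix n S"
proof (rule eq_matI)
  fix i j assume "i < dim_row (D * gm_matrix n S)" "j < dim_col (D * gm_matrix n S)"
  then have ij: "i < n" "j < n" using D(1) by (auto simp: gm_matrix_def)
  have "finite S" using S finite_subset by blast
  have "(\<Sum>l\<in>S. D $$ (l,j)) = (\<Sum>l\<in>S. if l = j then D $$ (j,j) else 0)"
    using D(2) S ij by (intro sum.cong refl) auto
  also have "\<dots> = (if j \<in> S then D $$ (j,j) else 0)" using \<open>finite S\<close> by simp
  finally have column: "(\<Sum>l\<in>S. D $$ (l,j)) = (if j \<in> S then D $$ (j,j) else 0)" .
  have "(\<Sum>l\<in>S. D $$ (i,l)) = (\<Sum>l\<in>S. if l = i then D $$ (i,i) else 0)"
    using D(2) S ij by (intro sum.cong refl) auto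
  also have "\<dots> = (if i \<in> S then D $$ (i,i) else 0)" using \<open>finite S\<close> by simp
  finally have row: "(\<Sum>l\<in>S. D $$ (i,l)) = (if i \<in> S then D $$ (i,i) else 0)" .
  show "(gm_matrix n S * D) $$ (i,j) = (D * gm_matrix n S) $$ (i,j)"
    unfolding gm_matrix_mult_left[OF D(1) S ij] gm_matrix_mult_right[OF D(1) S ij] row column
    using D(2)[OF ij] const[of i j] by (cases "i \<in> S"; cases "j \<in> S") auto
qed (use D(1) in \<open>auto simp: gm_matrix_def\<close>)

lemma cospectral_conj_involution:
  assumes A: "A \<in> carrier_mat n n" and Q: "Q \<in> carrier_mat n n" "Q * Q = 1\<^sub>m n"
  shows "cospectral A (Q * A * Q)"
proof -
  have "similar_mat (Q * A * Q) A"
    using A Q by (intro similar_matI[where P = Q and Q = Q and n = n]) auto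
  then have "char_poly (Q * A * Q) = char_poly A" by (rule char_poly_similar)
  moreover have "char_poly (map_mat complex_of_real A) = map_poly complex_of_real (char_poly A)"
    by (rule of_real_hom.char_poly_hom[OF A])
  moreover have "char_poly (map_mat complex_of_real (Q * A * Q))
      = map_poly complex_of_real (char_poly (Q * A * Q))"
    by (rule of_real_hom.char_poly_hom[where n = n]) (use A Q in simp)
  ultimately show ?thesis unfolding cospectral_def spectrum_mset_def by simp
qed

lemma cospectral_if_intertwined:
  assumes M: "M \<in> carrier_mat n n" "M' \<in> carrier_mat n n"
    and Q: "Q \<in> carrier_mat n n" "Q * Q = 1\<^sub>m n" and QM: "Q * M = M' * Q"
  shows "cospectral M M'"
proof -
  have "Q * M * Q = M' * (Q * Q)" using M Q QM by simp
  then have "Q * M * Q = M'" using Q M by simp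
  then show ?thesis using cospectral_conj_involution[OF M(1) Q] by simp
qed

lemma mult_sandwich_intertwine:
  assumes carrier: "Q \<in> carrier_mat n n" "S \<in> carrier_mat n n" "A \<in> carrier_mat n n"
      "A' \<in> carrier_mat n n"
    and QS: "Q * S = S * Q" and QA: "Q * A = A' * Q"
  shows "Q * (S * A * S) = S * A' * S * Q"
proof -
  have "Q * (S * A * S) = (Q * S) * A * S"
    using carrier by (simp add: assoc_mult_mat[of _ n n _ n _ n])
  also have "\<dots> = S * (Q * A) * S"
    unfolding QS using carrier by (simp add: assoc_mult_mat[of _ n n _ n _ n])
  also have "\<dots> = S * A' * (Q * S)"
    unfolding QA using carrier by (simp add: assoc_mult_mat[of _ n n _ n _ n])
  also have "\<dots> = S * A' * S * Q"
    unfolding QS using carrier by (simp add: assoc_mult_mat[of _ n n _ n _ n])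
  finally show ?thesis .
qed

lemma switching_cospectral:
  assumes Q: "Q \<in> carrier_mat n n" "Q * Q = 1\<^sub>m n"
    and deg: "\<forall>i<n. degree n G i = degree n H i"
    and QD: "Q * deg_mat n G = deg_mat n G * Q"
    and QDs: "Q * deg_inv_sqrt_mat n G = deg_inv_sqrt_mat n G * Q"
    and QA: "Q * graph_adj_mat n G = graph_adj_mat n H * Q"
  shows "cospectral (graph_adj_mat n G) (graph_adj_mat n H)"
    and "cospectral (laplacian n G) (laplacian n H)"
    and "cospectral (signless_laplacian n G) (signless_laplacian n H)"
    and "cospectral (normalized_laplacian n G) (normalized_laplacian n H)"
proof -
  define A where "A = graph_adj_mat n G"
  define A' where "A' = graph_adj_mat n H"
  define D where "D = deg_mat n G"
  define Ds where "Ds = deg_inv_sqrt_mat n G"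
  have carrier: "A \<in> carrier_mat n n" "A' \<in> carrier_mat n n" "D \<in> carrier_mat n n"
    "Ds \<in> carrier_mat n n"
    unfolding A_def A'_def D_def Ds_def graph_adj_mat_def deg_mat_def deg_inv_sqrt_mat_def by auto
  have degH: "deg_mat n H = D" "deg_inv_sqrt_mat n H = Ds"
    using deg unfolding D_def Ds_def deg_mat_def deg_inv_sqrt_mat_def by (auto intro!: eq_matI)
  note QD = QD[folded D_def] and QDs = QDs[folded Ds_def] and QA = QA[folded A_def A'_def]
  show "cospectral (graph_adj_mat n G) (graph_adj_mat n H)"
    using cospectral_if_intertwined[OF carrier(1,2) Q QA] unfolding A_def A'_def .
  have "Q * (D - A) = Q * D - Q * A" by (rule mult_minus_distrib_mat) (use carrier Q in auto)
  also have "\<dots> = (D - A') * Q"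
    unfolding QD QA by (rule minus_mult_distrib_mat[symmetric]) (use carrier Q in auto)
  finally have "cospectral (D - A) (D - A')"
    using carrier by (intro cospectral_if_intertwined[OF _ _ Q]) auto
  then show "cospectral (laplacian n G) (laplacian n H)"
    by (simp add: laplacian_def degH A_def A'_def D_def)
  have "Q * (D + A) = Q * D + Q * A" by (rule mult_add_distrib_mat) (use carrier Q in auto)
  also have "\<dots> = (D + A') * Q"
    unfolding QD QA by (rule add_mult_distrib_mat[symmetric]) (use carrier Q in auto)
  finally have "cospectral (D + A) (D + A')"
    using carrier by (intro cospectral_if_intertwined[OF _ _ Q]) auto
  then show "cospectral (signless_laplacian n G) (signless_laplacian n H)"
    by (simp add: signless_laplacian_def degH A_def A'_def D_def)
  have QN: "Q * (Ds * A * Ds) = Ds * A' * Ds * Q"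
    by (rule mult_sandwich_intertwine[OF Q(1) carrier(4,1,2) QDs QA])
  have "Q * (1\<^sub>m n - Ds * A * Ds) = Q * 1\<^sub>m n - Q * (Ds * A * Ds)"
    by (rule mult_minus_distrib_mat) (use carrier Q in auto)
  also have "\<dots> = 1\<^sub>m n * Q - Ds * A' * Ds * Q" unfolding QN using Q by simp
  also have "\<dots> = (1\<^sub>m n - Ds * A' * Ds) * Q"
    by (rule minus_mult_distrib_mat[symmetric]) (use carrier Q in auto)
  finally have "cospectral (1\<^sub>m n - Ds * A * Ds) (1\<^sub>m n - Ds * A' * Ds)"
    using carrier by (intro cospectral_if_intertwined[OF _ _ Q]) auto
  then show "cospectral (normalized_laplacian n G) (normalized_laplacian n H)"
    by (simp add: normalized_laplacian_def degH A_def A'_def Ds_def)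
qed

lemma graph_adj_mat_index: "i < n \<Longrightarrow> j < n \<Longrightarrow> graph_adj_mat n E $$ (i,j) = (if E i j then 1 else 0)"
  unfolding graph_adj_mat_def by simp

section \<open>Independence, clique and chromatic numbers\<close>

lemma independence_number_eqI:
  assumes S: "S \<subseteq> {0..<n}" "\<forall>i\<in>S. \<forall>j\<in>S. \<not> E i j" "card S = k"
    and bound: "\<And>T. T \<subseteq> {0..<n} \<Longrightarrow> \<forall>i\<in>T. \<forall>j\<in>T. \<not> E i j \<Longrightarrow> card T \<le> k"
  shows "independence_number n E = k"
proof -
  have "finite {card T | T. T \<subseteq> {0..<n} \<and> (\<forall>i\<in>T. \<forall>j\<in>T. \<not> E i j)}"
    by (rule finite_subset[of _ "card ` Pow {0..<n}"]) auto
  then show ?thesis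
    unfolding independence_number_def by (rule Max_eqI) (use S bound in auto)
qed

lemma clique_chromatic_number_eqI:
  assumes K: "K \<subseteq> {0..<n}" "\<forall>i\<in>K. \<forall>j\<in>K. i \<noteq> j \<longrightarrow> E i j" "card K = k"
    and c: "\<forall>i<n. c i < k" "\<forall>i<n. \<forall>j<n. E i j \<longrightarrow> c i \<noteq> c j"
  shows "clique_number n E = k" and "chromatic_number n E = k"
proof -
  have card_le: "card T \<le> k'"
    if T: "T \<subseteq> {0..<n}" "\<forall>i\<in>T. \<forall>j\<in>T. i \<noteq> j \<longrightarrow> E i j"
      and c': "\<forall>i<n. c' i < k'" "\<forall>i<n. \<forall>j<n. E i j \<longrightarrow> c' i \<noteq> c' j" for T c' k'
  proof -
    have "inj_on c' T"
    proof (rule inj_onI, rule ccontr)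
      fix x y assume xy: "x \<in> T" "y \<in> T" "c' x = c' y" "x \<noteq> y"
      then have "E x y" using T(2) by blast
      moreover have "x < n" "y < n" using T(1) xy(1,2) by auto
      ultimately show False using c'(2) xy(3) by blast
    qed
    then have "card T = card (c' ` T)" by (simp add: card_image)
    also have "\<dots> \<le> card {..<k'}" using T(1) c'(1) by (intro card_mono) auto
    finally show ?thesis by simp
  qed
  have "finite {card T | T. T \<subseteq> {0..<n} \<and> (\<forall>i\<in>T. \<forall>j\<in>T. i \<noteq> j \<longrightarrow> E i j)}"
    by (rule finite_subset[of _ "card ` Pow {0..<n}"]) auto
  then show "clique_number n E = k"
    unfolding clique_number_def
  proof (rule Max_eqI)
    fix y assume "y \<in> {card T | T. T \<subseteq> {0..<n} \<and> (\<forall>i\<in>T. \<forall>j\<in>T. i \<noteq> j \<longrightarrow> E i j)}"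
    then show "y \<le> k" using card_le[OF _ _ c] by blast
  next
    show "k \<in> {card T | T. T \<subseteq> {0..<n} \<and> (\<forall>i\<in>T. \<forall>j\<in>T. i \<noteq> j \<longrightarrow> E i j)}"
      using K by blast
  qed
  show "chromatic_number n E = k"
    unfolding chromatic_number_def
  proof (rule Least_equality)
    show "\<exists>c. (\<forall>i<n. c i < k) \<and> (\<forall>i<n. \<forall>j<n. E i j \<longrightarrow> c i \<noteq> c j)"
      using c by (intro exI[of _ c]) blast
  next
    fix k' :: nat assume "\<exists>c'. (\<forall>i<n. c' i < k') \<and> (\<forall>i<n. \<forall>j<n. E i j \<longrightarrow> c' i \<noteq> c' j)"
    then show "k \<le> k'" using card_le[OF K(1,2)] K(3) by blast
  qed
qed

section \<open>Cones over a core and a clique\<close>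

definition core_edge :: "(nat \<times> nat) list \<Rightarrow> nat \<Rightarrow> nat \<Rightarrow> bool" where
  "core_edge es i j \<longleftrightarrow> (i,j) \<in> set es \<or> (j,i) \<in> set es"

definition valid_core :: "(nat \<times> nat) list \<Rightarrow> bool" where
  "valid_core es \<longleftrightarrow> list_all (\<lambda>(a,b). a \<noteq> b \<and> 1 \<le> a \<and> a < 11 \<and> 1 \<le> b \<and> b < 11) es"

definition cone_graph :: "(nat \<times> nat) list \<Rightarrow> nat \<Rightarrow> nat \<Rightarrow> nat \<Rightarrow> bool" where
  "cone_graph es n i j \<longleftrightarrow> i < n \<and> j < n \<and> i \<noteq> j \<and>
     (i = 0 \<or> j = 0 \<or> (i < 11 \<and> j < 11 \<and> core_edge es i j) \<or> (11 \<le> i \<and> 11 \<le> j))"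

lemma valid_coreD:
  "valid_core es \<Longrightarrow> core_edge es i j \<Longrightarrow> i \<noteq> j \<and> 1 \<le> i \<and> i < 11 \<and> 1 \<le> j \<and> j < 11"
  unfolding valid_core_def core_edge_def list_all_iff by auto

lemma cone_graph_simple: "simple_graph n (cone_graph es n)"
  unfolding simple_graph_def cone_graph_def core_edge_def by blast

lemma cone_graph_connected:
  assumes "0 < n"
  shows "connected_graph n (cone_graph es n)"
proof -
  have "(cone_graph es n)\<^sup>*\<^sup>* i 0" "(cone_graph es n)\<^sup>*\<^sup>* 0 i" if "i < n" for i
    using that by (cases "i = 0"; auto simp: cone_graph_def)+
  then show ?thesis unfolding connected_graph_def using assms by (meson rtranclp_trans)
qed

lemma cone_graph_outside_core:
  "i \<notin> {1..<11} \<Longrightarrow> cone_graph es n i j = cone_graph es' n i j"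
  "j \<notin> {1..<11} \<Longrightarrow> cone_graph es n i j = cone_graph es' n i j"
  unfolding cone_graph_def by auto

lemma degree_cone_graph_hub: "degree n (cone_graph es n) 0 = n - 1"
proof -
  have "{j. j < n \<and> cone_graph es n 0 j} = {1..<n}" unfolding cone_graph_def by auto
  then show ?thesis unfolding degree_def by simp
qed

definition core_degree :: "(nat \<times> nat) list \<Rightarrow> nat \<Rightarrow> nat" where
  "core_degree es i = length (filter (cone_graph es 11 i) [0..<11])"

lemma degree_cone_graph_core:
  assumes "valid_core es" "i \<in> {1..<11}" "11 \<le> n"
  shows "degree n (cone_graph es n) i = core_degree es i"
proof -
  have "{j. j < n \<and> cone_graph es n i j} = set (filter (cone_graph es 11 i) [0..<11])"
    using assms valid_coreD[OF assms(1), of i] unfolding cone_graph_def by fastforce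
  then show ?thesis
    unfolding degree_def core_degree_def by (metis distinct_card distinct_filter distinct_upt)
qed

lemma cone_graph_irregular:
  assumes "valid_core es" "13 \<le> n"
  shows "irregular n (cone_graph es n)"
proof -
  have "core_degree es 1 \<le> 11" unfolding core_degree_def by (metis diff_zero length_filter_le length_upt)
  then have "degree n (cone_graph es n) 1 \<noteq> degree n (cone_graph es n) 0"
    using assms degree_cone_graph_core[OF assms(1), of 1] degree_cone_graph_hub by auto
  moreover have "1 < n" "0 < n" using assms(2) by simp_all
  ultimately show ?thesis unfolding irregular_def by blast
qed

lemma card_independent_cone_graph_le:
  assumes es: "valid_core es"
    and core_bound: "\<And>T. T \<subseteq> {1..<11} \<Longrightarrow> \<forall>a\<in>T. \<forall>b\<in>T. \<not> core_edge es a b \<Longrightarrow> card T \<le> k"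
    and T: "T \<subseteq> {0..<n}" "\<forall>i\<in>T. \<forall>j\<in>T. \<not> cone_graph es n i j"
  shows "card T \<le> k + 1"
proof (cases "0 \<in> T")
  case True
  then have "T \<subseteq> {0}" using T unfolding cone_graph_def by fastforce
  then show ?thesis using card_mono[of "{0}" T] by simp
next
  case False
  have split: "T \<subseteq> (T \<inter> {1..<11}) \<union> (T \<inter> {11..<n})"
  proof
    fix x assume "x \<in> T"
    have "x \<noteq> 0"
    proof
      assume "x = 0"
      with \<open>x \<in> T\<close> False show False by simp
    qed
    moreover have "x < n" using T(1) \<open>x \<in> T\<close> by auto
    ultimately show "x \<in> (T \<inter> {1..<11}) \<union> (T \<inter> {11..<n})" using \<open>x \<in> T\<close> by auto
  qed
  have "\<not> core_edge es a b" if "a \<in> T" "b \<in> T" for a b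
  proof
    assume e: "core_edge es a b"
    have "a < n" "b < n" using T(1) that by auto
    then have "cone_graph es n a b" using e valid_coreD[OF es e] by (auto simp: cone_graph_def)
    then show False using T(2) that by blast
  qed
  then have "card (T \<inter> {1..<11}) \<le> k" by (intro core_bound) auto
  moreover have "card (T \<inter> {11..<n}) \<le> 1"
  proof -
    have "a = b" if "a \<in> T \<inter> {11..<n}" "b \<in> T \<inter> {11..<n}" for a b
    proof (rule ccontr)
      assume "a \<noteq> b"
      then have "cone_graph es n a b" using that by (auto simp: cone_graph_def)
      then show False using T(2) that by blast
    qed
    then show ?thesis using card_le_Suc0_iff_eq[of "T \<inter> {11..<n}"] by auto
  qed
  ultimately show ?thesis
    using card_mono[OF _ split] card_Un_le[of "T \<inter> {1..<11}" "T \<inter> {11..<n}"] by simp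
qed

lemma independence_number_cone_graph:
  assumes es: "valid_core es" and n: "12 \<le> n"
    and W: "W \<subseteq> {1..<11}" "\<forall>a\<in>W. \<forall>b\<in>W. \<not> core_edge es a b" "card W = k"
    and core_bound: "\<And>T. T \<subseteq> {1..<11} \<Longrightarrow> \<forall>a\<in>T. \<forall>b\<in>T. \<not> core_edge es a b \<Longrightarrow> card T \<le> k"
  shows "independence_number n (cone_graph es n) = k + 1"
proof (rule independence_number_eqI)
  show "insert 11 W \<subseteq> {0..<n}" using W(1) n by auto
  show "\<forall>i\<in>insert 11 W. \<forall>j\<in>insert 11 W. \<not> cone_graph es n i j"
    using W(1,2) unfolding cone_graph_def by auto
  have "11 \<notin> W" using W(1) by auto
  then show "card (insert 11 W) = k + 1"
    using W(3) finite_subset[OF W(1)] by simp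
qed (rule card_independent_cone_graph_le[OF es core_bound])

definition independent_list :: "(nat \<times> nat) list \<Rightarrow> nat list \<Rightarrow> bool" where
  "independent_list es xs \<longleftrightarrow> list_all (\<lambda>a. list_all (\<lambda>b. \<not> core_edge es a b) xs) xs"

definition no_independent_triple :: "(nat \<times> nat) list \<Rightarrow> nat list \<Rightarrow> bool" where
  "no_independent_triple es P \<longleftrightarrow>
     list_all (\<lambda>xs. independent_list es xs \<longrightarrow> length xs \<le> 2) (subseqs P)"

lemma card_independent_le_2:
  assumes "no_independent_triple es P" "T \<subseteq> set P" "\<forall>a\<in>T. \<forall>b\<in>T. \<not> core_edge es a b"
  shows "card T \<le> 2"
proof -
  obtain xs where xs: "xs \<in> set (subseqs P)" "T = set xs"
    using subset_subseqs[OF assms(2)] by blast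
  then have "length xs \<le> 2"
    using assms(1,3) unfolding no_independent_triple_def independent_list_def list_all_iff by auto
  then show ?thesis using xs(2) card_length[of xs] by simp
qed

lemma card_independent_le_4:
  assumes "no_independent_triple es P" "no_independent_triple es P'" "T \<subseteq> set P \<union> set P'"
    and "\<forall>a\<in>T. \<forall>b\<in>T. \<not> core_edge es a b"
  shows "card T \<le> 4"
proof -
  have "card (T \<inter> set P) \<le> 2" by (rule card_independent_le_2[OF assms(1)]) (use assms(4) in auto)
  moreover have "card (T \<inter> set P') \<le> 2"
    by (rule card_independent_le_2[OF assms(2)]) (use assms(4) in auto)
  moreover have "card T \<le> card (T \<inter> set P) + card (T \<inter> set P')"
    using assms(3) card_Un_le[of "T \<inter> set P" "T \<inter> set P'"] card_mono[of "(T \<inter> set P) \<union> (T \<inter> set P')" T]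
    by (metis Int_Un_distrib inf.absorb_iff1)
  ultimately show ?thesis by linarith
qed

lemma independence_number_cone_graph_eq_5:
  assumes "valid_core es" "no_independent_triple es P" "no_independent_triple es P'"
    and "list_all (\<lambda>i. i \<in> set P \<union> set P') [1..<11]"
    and "independent_list es W" "distinct W" "length W = 4" "set W \<subseteq> {1..<11}" "12 \<le> n"
  shows "independence_number n (cone_graph es n) = 5"
proof -
  have "\<forall>a\<in>set W. \<forall>b\<in>set W. \<not> core_edge es a b" "card (set W) = 4"
    using assms(5-7) unfolding independent_list_def list_all_iff by (auto simp: distinct_card)
  moreover have "{1..<11} \<subseteq> set P \<union> set P'" using assms(4) by (auto simp: list_all_iff)
  ultimately show ?thesis
    using independence_number_cone_graph[OF assms(1,9,8), of 4] card_independent_le_4[OF assms(2,3)]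
    by fastforce
qed

definition proper_core_colouring :: "(nat \<times> nat) list \<Rightarrow> nat list \<Rightarrow> nat \<Rightarrow> bool" where
  "proper_core_colouring es c m \<longleftrightarrow>
     list_all (\<lambda>i. c ! i < m) [1..<11] \<and> list_all (\<lambda>(a,b). c ! a \<noteq> c ! b) es"

lemma clique_chromatic_number_cone_graph:
  assumes es: "valid_core es" and colouring: "proper_core_colouring es c m" and n: "m + 11 \<le> n"
  shows "clique_number n (cone_graph es n) = n - 10"
    and "chromatic_number n (cone_graph es n) = n - 10"
proof -
  have colour: "\<forall>i\<in>{1..<11}. c ! i < m" "\<forall>i j. core_edge es i j \<longrightarrow> c ! i \<noteq> c ! j"
    using colouring unfolding proper_core_colouring_def core_edge_def list_all_iff by fastforce+
  define f where "f i = (if i = 0 then 0 else if i < 11 then 1 + c ! i else i - 10)" for i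
  have K: "insert 0 {11..<n} \<subseteq> {0..<n}"
    "\<forall>i\<in>insert 0 {11..<n}. \<forall>j\<in>insert 0 {11..<n}. i \<noteq> j \<longrightarrow> cone_graph es n i j"
    "card (insert 0 {11..<n}) = n - 10"
    using n by (auto simp: cone_graph_def)
  have "f i < n - 10" if "i < n" for i
  proof (cases "i \<in> {1..<11}")
    case True
    then show ?thesis using colour(1)[rule_format, OF True] n by (auto simp: f_def)
  qed (use that n in \<open>auto simp: f_def\<close>)
  then have "\<forall>i<n. f i < n - 10" by blast
  moreover have "\<forall>i<n. \<forall>j<n. cone_graph es n i j \<longrightarrow> f i \<noteq> f j"
    using colour(2) valid_coreD[OF es] by (auto simp: f_def cone_graph_def)
  ultimately show "clique_number n (cone_graph es n) = n - 10"
    and "chromatic_number n (cone_graph es n) = n - 10"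
    using clique_chromatic_number_eqI[OF K] by blast+
qed

definition adjacency_int :: "(nat \<times> nat) list \<Rightarrow> nat \<Rightarrow> nat \<Rightarrow> int" where
  "adjacency_int es i j = (if cone_graph es 11 i j then 1 else 0)"

(* Both sides of Q A = A' Q on the block {0..<11} (gm_matrix_mult_left and gm_matrix_mult_right),
   multiplied by card S to make them integers. *)
definition switching_check :: "nat list \<Rightarrow> (nat \<times> nat) list \<Rightarrow> (nat \<times> nat) list \<Rightarrow> bool" where
  "switching_check S es es' \<longleftrightarrow> list_all (\<lambda>i. list_all (\<lambda>j.
     (if i \<in> set S then 2 * sum_list (map (\<lambda>l. adjacency_int es l j) S) - int (length S) * adjacency_int es i j
      else int (length S) * adjacency_int es i j) =
     (if j \<in> set S then 2 * sum_list (map (\<lambda>l. adjacency_int es' i l) S) - int (length S) * adjacency_int es' i j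
      else int (length S) * adjacency_int es' i j)) [0..<11]) [0..<11]"

definition degree_check :: "nat list \<Rightarrow> (nat \<times> nat) list \<Rightarrow> (nat \<times> nat) list \<Rightarrow> bool" where
  "degree_check S es es' \<longleftrightarrow>
     list_all (\<lambda>i. core_degree es i = core_degree es' i) [1..<11] \<and>
     list_all (\<lambda>i. core_degree es i = core_degree es (hd S)) S"

lemma switching_check_entry:
  assumes check: "switching_check S es es'" and S: "distinct S" "set S \<subseteq> {1..<11}" "S \<noteq> []"
    and n: "11 \<le> n" and ij: "i < 11" "j < 11"
  defines "A \<equiv> graph_adj_mat n (cone_graph es n)" and "A' \<equiv> graph_adj_mat n (cone_graph es' n)"
  shows "(if i \<in> set S then 2 / card (set S) * (\<Sum>l\<in>set S. A $$ (l,j)) - A $$ (i,j) else A $$ (i,j)) =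
         (if j \<in> set S then 2 / card (set S) * (\<Sum>l\<in>set S. A' $$ (i,l)) - A' $$ (i,j) else A' $$ (i,j))"
proof -
  have adj: "graph_adj_mat n (cone_graph e n) $$ (a,b) = real_of_int (adjacency_int e a b)"
    if "a < 11" "b < 11" for e a b
    using that n by (simp add: graph_adj_mat_index adjacency_int_def cone_graph_def)
  have core: "l < 11" if "l \<in> set S" for l using S(2) that by auto
  have k: "card (set S) = length S" "length S \<noteq> 0" using S(1,3) by (auto simp: distinct_card)
  have int_eq: "(if i \<in> set S then 2 * (\<Sum>l\<in>set S. adjacency_int es l j) - int (length S) * adjacency_int es i j
        else int (length S) * adjacency_int es i j) =
        (if j \<in> set S then 2 * (\<Sum>l\<in>set S. adjacency_int es' i l) - int (length S) * adjacency_int es' i j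
        else int (length S) * adjacency_int es' i j)"
    using check ij unfolding switching_check_def list_all_iff sum.distinct_set_conv_list[OF S(1)]
    by auto
  have real_eq: "(if i \<in> set S
        then 2 * (\<Sum>l\<in>set S. real_of_int (adjacency_int es l j)) - length S * real_of_int (adjacency_int es i j)
        else length S * real_of_int (adjacency_int es i j)) =
      (if j \<in> set S
        then 2 * (\<Sum>l\<in>set S. real_of_int (adjacency_int es' i l)) - length S * real_of_int (adjacency_int es' i j)
        else length S * real_of_int (adjacency_int es' i j))"
    using arg_cong[OF int_eq, of real_of_int] by (cases "i \<in> set S"; cases "j \<in> set S") simp_all
  have sums: "(\<Sum>l\<in>set S. A $$ (l,j)) = (\<Sum>l\<in>set S. real_of_int (adjacency_int es l j))"
    "(\<Sum>l\<in>set S. A' $$ (i,l)) = (\<Sum>l\<in>set S. real_of_int (adjacency_int es' i l))"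
    using adj core ij unfolding A_def A'_def by (auto intro!: sum.cong)
  have scale: "real (length S) * (if c then 2 / real (length S) * p - q else q) =
      (if c then 2 * p - real (length S) * q else real (length S) * q)" for c p q
    using k(2) by (cases c) (simp_all add: field_simps)
  have vals: "A $$ (i,j) = real_of_int (adjacency_int es i j)"
    "A' $$ (i,j) = real_of_int (adjacency_int es' i j)"
    using adj[OF ij] by (simp_all add: A_def A'_def)
  show ?thesis
    unfolding sums k(1) vals using real_eq[folded scale] k(2) by simp
qed

lemma cone_graph_switching:
  assumes check: "switching_check S es es'" and S: "distinct S" "set S \<subseteq> {1..<11}" "S \<noteq> []"
    and n: "11 \<le> n"
  shows "gm_matrix n (set S) * graph_adj_mat n (cone_graph es n)
       = graph_adj_mat n (cone_graph es' n) * gm_matrix n (set S)"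
proof (rule eq_matI)
  let ?Q = "gm_matrix n (set S)"
  let ?A = "graph_adj_mat n (cone_graph es n)" and ?A' = "graph_adj_mat n (cone_graph es' n)"
  have carrier: "?A \<in> carrier_mat n n" "?A' \<in> carrier_mat n n" unfolding graph_adj_mat_def by auto
  have Sn: "set S \<subseteq> {..<n}" using S(2) n by auto
  fix i j assume "i < dim_row (?A' * ?Q)" "j < dim_col (?A' * ?Q)"
  then have ij: "i < n" "j < n" using carrier by (auto simp: gm_matrix_def)
  have no_cross: "graph_adj_mat n (cone_graph e n) $$ (a,b) = 0"
    if "a < n" "b < n" "11 \<le> a \<and> b \<in> set S \<or> a \<in> set S \<and> 11 \<le> b" for e a b
    using that S(2) by (auto simp: graph_adj_mat_index cone_graph_def)
  note product = gm_matrix_mult_left[OF carrier(1) Sn ij] gm_matrix_mult_right[OF carrier(2) Sn ij]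
  consider "i < 11" "j < 11" | "11 \<le> i" | "i < 11" "11 \<le> j" by linarith
  then show "(?Q * ?A) $$ (i,j) = (?A' * ?Q) $$ (i,j)"
  proof cases
    case 1
    then show ?thesis unfolding product by (rule switching_check_entry[OF check S n])
  next
    case 2
    then have "i \<notin> set S" using S(2) by auto
    moreover have "(\<Sum>l\<in>set S. ?A' $$ (i,l)) = 0"
    proof (intro sum.neutral ballI)
      fix l assume "l \<in> set S"
      then show "?A' $$ (i,l) = 0" using 2 ij Sn by (intro no_cross) auto
    qed
    moreover have "?A $$ (i,j) = ?A' $$ (i,j)"
      using 2 ij cone_graph_outside_core(1)[where i = i and es = es and es' = es']
      by (simp add: graph_adj_mat_index)
    moreover have "j \<in> set S \<Longrightarrow> ?A' $$ (i,j) = 0" using 2 ij by (intro no_cross) auto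
    ultimately show ?thesis unfolding product by simp
  next
    case 3
    then have "j \<notin> set S" using S(2) by auto
    moreover have "(\<Sum>l\<in>set S. ?A $$ (l,j)) = 0"
    proof (intro sum.neutral ballI)
      fix l assume "l \<in> set S"
      then show "?A $$ (l,j) = 0" using 3 ij Sn by (intro no_cross) auto
    qed
    moreover have "?A $$ (i,j) = ?A' $$ (i,j)"
      using 3 ij cone_graph_outside_core(2)[where j = j and es = es and es' = es']
      by (simp add: graph_adj_mat_index)
    moreover have "i \<in> set S \<Longrightarrow> ?A $$ (i,j) = 0" using 3 ij by (intro no_cross) auto
    ultimately show ?thesis unfolding product by simp
  qed
qed (simp_all add: gm_matrix_def graph_adj_mat_def)

lemma cone_graph_cospectral:
  assumes es: "valid_core es" "valid_core es'"
    and S: "distinct S" "set S \<subseteq> {1..<11}" "S \<noteq> []"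
    and checks: "switching_check S es es'" "degree_check S es es'" and n: "11 \<le> n"
  shows "cospectral (graph_adj_mat n (cone_graph es n)) (graph_adj_mat n (cone_graph es' n))"
    and "cospectral (laplacian n (cone_graph es n)) (laplacian n (cone_graph es' n))"
    and "cospectral (signless_laplacian n (cone_graph es n)) (signless_laplacian n (cone_graph es' n))"
    and "cospectral (normalized_laplacian n (cone_graph es n)) (normalized_laplacian n (cone_graph es' n))"
proof -
  let ?G = "cone_graph es n" and ?Q = "gm_matrix n (set S)"
  have Sn: "set S \<subseteq> {..<n}" using S(2) n by auto
  have deg: "degree n ?G i = degree n (cone_graph es' n) i" for i
  proof (cases "i \<in> {1..<11}")
    case True
    then show ?thesis
      using checks(2) degree_cone_graph_core[OF es(1) True n] degree_cone_graph_core[OF es(2) True n]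
      unfolding degree_check_def list_all_iff by auto
  next
    case False
    then show ?thesis unfolding degree_def using cone_graph_outside_core(1)[OF False] by metis
  qed
  have deg_S: "degree n ?G i = degree n ?G i'" if "i \<in> set S" "i' \<in> set S" for i i'
  proof -
    have "i \<in> {1..<11}" "i' \<in> {1..<11}" using that S(2) by auto
    moreover have "core_degree es i = core_degree es (hd S)" "core_degree es i' = core_degree es (hd S)"
      using that checks(2) unfolding degree_check_def list_all_iff by auto
    ultimately show ?thesis using degree_cone_graph_core[OF es(1) _ n] by simp
  qed
  have in_range: "i < n" if "i \<in> set S" for i using that Sn by auto
  have D: "deg_mat n ?G $$ (i,i) = deg_mat n ?G $$ (j,j)" if "i \<in> set S" "j \<in> set S" for i j
    using deg_S[OF that] in_range[OF that(1)] in_range[OF that(2)] by (simp add: deg_mat_def)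
  have Ds: "deg_inv_sqrt_mat n ?G $$ (i,i) = deg_inv_sqrt_mat n ?G $$ (j,j)"
    if "i \<in> set S" "j \<in> set S" for i j
    using deg_S[OF that] in_range[OF that(1)] in_range[OF that(2)] by (simp add: deg_inv_sqrt_mat_def)
  have "?Q * deg_mat n ?G = deg_mat n ?G * ?Q"
    by (rule gm_matrix_commute_diagonal[OF _ _ D Sn]) (auto simp: deg_mat_def)
  moreover have "?Q * deg_inv_sqrt_mat n ?G = deg_inv_sqrt_mat n ?G * ?Q"
    by (rule gm_matrix_commute_diagonal[OF _ _ Ds Sn]) (auto simp: deg_inv_sqrt_mat_def)
  moreover have "?Q * ?Q = 1\<^sub>m n" using Sn S(3) by (intro gm_matrix_involution) auto
  ultimately show "cospectral (graph_adj_mat n ?G) (graph_adj_mat n (cone_graph es' n))"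
    and "cospectral (laplacian n ?G) (laplacian n (cone_graph es' n))"
    and "cospectral (signless_laplacian n ?G) (signless_laplacian n (cone_graph es' n))"
    and "cospectral (normalized_laplacian n ?G) (normalized_laplacian n (cone_graph es' n))"
    using switching_cospectral[OF gm_matrix_carrier _ _ _ _ cone_graph_switching[OF checks(1) S n]]
      deg by blast+
qed

lemma lovasz_theta_cone_graph_ge:
  assumes n: "12 \<le> n" and cert: "psd_certificate 12 a M V"
    and hub: "\<forall>j<12. entry M 0 j = 0" and edges: "\<forall>(i,j) \<in> set es. entry M i j = 0"
    and trace: "0 < (\<Sum>i<12. entry M i i)"
  shows "real_of_int (\<Sum>i<12. \<Sum>j<12. entry M i j) / real_of_int (\<Sum>i<12. entry M i i)
      \<le> lovasz_theta n (cone_graph es n)"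
proof -
  define Y where "Y i j = real_of_int (entry M i j)" for i j
  have outside: "Y i j = 0" if "12 \<le> i \<or> 12 \<le> j" for i j
    using psd_certificate_entry_eq_0[OF cert that] by (simp add: Y_def)
  have sym: "entry M i j = entry M j i" for i j by (rule psd_certificate_symmetric[OF cert])
  have form: "nonneg_form n Y"
    unfolding Y_def by (rule nonneg_form_if_dual_psd[OF psd_certificate_dual_psd[OF cert n]])
  have symmetric: "symmetric_on n Y" using sym by (simp add: symmetric_on_def Y_def)
  have zero_on_edges: "\<forall>i<n. \<forall>j<n. cone_graph es n i j \<longrightarrow> Y i j = 0"
  proof (intro allI impI)
    fix i j assume "i < n" "j < n" and edge: "cone_graph es n i j"
    show "Y i j = 0"
    proof (cases "i < 12 \<and> j < 12")
      case True
      then show ?thesis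
        using edge hub edges sym[of i j] unfolding cone_graph_def core_edge_def Y_def by auto
    qed (use outside in auto)
  qed
  have "(\<Sum>i<n. Y i i) = (\<Sum>i<12. Y i i)" using n outside by (intro sum.mono_neutral_right) auto
  then have trace_eq: "real_of_int (\<Sum>i<12. entry M i i) = (\<Sum>i<n. Y i i)" by (simp add: Y_def)
  have total_eq: "(\<Sum>i<n. \<Sum>j<n. Y i j) = real_of_int (\<Sum>i<12. \<Sum>j<12. entry M i j)"
    using n outside by (subst double_sum_support[of "{..<12}"]) (auto simp: Y_def)
  have "0 < real_of_int (\<Sum>i<12. entry M i i)" using trace by linarith
  note normalized = theta_feasible_normalize[OF form symmetric zero_on_edges trace_eq this]
  show ?thesis using lovasz_theta_ge[OF normalized(1)] normalized(2) total_eq by simp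
qed

(* The dual matrix for the cone: the scaled core certificate Y plus the rank-one term z z^T / t. *)
lemma cone_graph_dual_slack:
  fixes s t :: real
  assumes es: "valid_core es" and t: "0 < t" and s: "0 < s"
    and core: "\<And>i j. i \<in> {1..<11} \<Longrightarrow> j \<in> {1..<11} \<Longrightarrow> \<not> core_edge es i j \<Longrightarrow>
                 Y i j = (if i = j then s * (t - 1) else - s)"
    and off_core: "\<And>i j. i \<notin> {1..<11} \<or> j \<notin> {1..<11} \<Longrightarrow> Y i j = 0"
    and ij: "i < n" "j < n"
  defines "z \<equiv> \<lambda>k. if k \<in> {1..<11} then 1 else - t"
  shows "cone_graph es n i j \<or>
         (t + 1) / (t * s) * Y i j + 1 / t * (z i * z j) = (if i = j then t + 1 else 0) - 1"
proof (cases "i \<in> {1..<11} \<and> j \<in> {1..<11}")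
  case in_core: True
  show ?thesis
  proof (cases "core_edge es i j")
    case True
    then show ?thesis using in_core ij valid_coreD[OF es True] by (auto simp: cone_graph_def)
  next
    case False
    have z: "z i * z j = 1" using in_core by (simp add: z_def)
    show ?thesis
    proof (cases "i = j")
      case True
      have "(t + 1) / (t * s) * Y i j + 1 / t * (z i * z j) = (t + 1) / (t * s) * (s * (t - 1)) + 1 / t"
        using core[of i j] in_core False z True by simp
      also have "\<dots> = t" using t s by (simp add: field_simps)
      finally show ?thesis using True by simp
    next
      case ne: False
      have "(t + 1) / (t * s) * Y i j + 1 / t * (z i * z j) = (t + 1) / (t * s) * (- s) + 1 / t"
        using core[of i j] in_core False z ne by simp
      also have "\<dots> = - 1" using t s by (simp add: field_simps)
      finally show ?thesis using ne by simp
    qed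
  qed
next
  case not_core: False
  then have Y: "Y i j = 0" using off_core by blast
  show ?thesis
  proof (cases "i = j")
    case True
    then have "z i * z j = t * t" using not_core by (auto simp: z_def)
    then show ?thesis using Y t True by simp
  next
    case ne: False
    show ?thesis
    proof (cases "i \<in> {1..<11} \<or> j \<in> {1..<11}")
      case True
      then have "z i * z j = - t" using not_core by (auto simp: z_def)
      then show ?thesis using Y t ne by simp
    next
      case False
      then show ?thesis using ij ne by (auto simp: cone_graph_def)
    qed
  qed
qed

lemma lovasz_theta_cone_graph_le:
  fixes u s :: int
  assumes n: "11 \<le> n" and es: "valid_core es" and cert: "psd_certificate 11 a M V"
    and s: "0 < s" and u: "0 \<le> u"
    and pattern: "\<forall>i<11. \<forall>j<11. core_edge es i j \<or>
                    entry M i j = (if i = 0 \<or> j = 0 then 0 else if i = j then u else - s)"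
  shows "lovasz_theta n (cone_graph es n) \<le> u / s + 2"
proof -
  define t where "t = u / s + 1"
  have "0 \<le> real_of_int u / real_of_int s" using s u by simp
  then have t: "0 < t" unfolding t_def by linarith
  have s': "0 < real_of_int s" using s by simp
  define Y where "Y i j = real_of_int (entry M i j)" for i j
  have core: "Y i j = (if i = j then s * (t - 1) else - real_of_int s)"
    if "i \<in> {1..<11}" "j \<in> {1..<11}" "\<not> core_edge es i j" for i j
    using pattern[rule_format, of i j] that s' by (auto simp: Y_def t_def)
  have off_core: "Y i j = 0" if "i \<notin> {1..<11} \<or> j \<notin> {1..<11}" for i j
  proof (cases "i < 11 \<and> j < 11")
    case True
    then show ?thesis
      using that pattern[rule_format, of i j] valid_coreD[OF es, of i j] by (auto simp: Y_def)
  qed (use psd_certificate_entry_eq_0[OF cert] in \<open>auto simp: Y_def\<close>)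
  define z where "z k = (if k \<in> {1..<11} then 1 else - t)" for k :: nat
  have dual: "dual_psd n (\<lambda>i j. (t + 1) / (t * s) * Y i j + 1 / t * (z i * z j))"
    unfolding Y_def using t s
    by (intro dual_psd_nonneg_combination psd_certificate_dual_psd[OF cert n] dual_psd_rank_one) auto
  have slack: "\<forall>i<n. \<forall>j<n. cone_graph es n i j \<or>
      (t + 1) / (t * s) * Y i j + 1 / t * (z i * z j) = (if i = j then t + 1 else 0) - 1"
    unfolding z_def by (intro allI impI cone_graph_dual_slack[OF es t s' core off_core])
  have "entry_sum n B \<le> t + 1" if "theta_feasible n (cone_graph es n) B" for B
    by (rule entry_sum_le_by_duality[OF that dual slack])
  moreover have "\<forall>i<n. \<not> cone_graph es n i i" by (simp add: cone_graph_def)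
  ultimately show ?thesis using n by (intro lovasz_theta_le) (auto simp: t_def algebra_simps)
qed

section \<open>The two graphs\<close>

definition edges_X :: "(nat \<times> nat) list" where
  "edges_X = [(1,6), (1,7), (1,8), (2,6), (2,9), (2,10), (3,5), (3,7), (3,10), (4,5), (4,8), (4,9), (5,7), (5,8), (7,9)]"

definition edges_Y :: "(nat \<times> nat) list" where
  "edges_Y = [(1,5), (1,9), (1,10), (2,5), (2,7), (2,8), (3,6), (3,8), (3,9), (4,6), (4,7), (4,10), (5,7), (5,8), (7,9)]"

(* theta_primal_X / 100000 is a feasible matrix for every cone over edges_X; it is supported on the
   vertices 1..11. *)
definition theta_primal_X :: "int list list" where
  "theta_primal_X = [[0, 0, 0, 0, 0, 0, 0, 0, 0, 0, 0, 0], [0, 7146, 5263, 6733, 5437, 1344, 0, 0, 0, 3649, 187, 7137], [0, 5263, 6099, 5242, 6507, (-436), 0, 2787, (-64), 0, 0, 6090], [0, 6733, 5242, 7631, 5053, 0, 785, 0, 2132, 4207, 0, 7621], [0, 5437, 6507, 5053, 7197, 0, 815, 3864, 0, 0, 1100, 7187], [0, 1344, (-436), 0, 0, 2754, 1935, 0, 0, 2961, 2894, 2745], [0, 0, 0, 785, 815, 1935, 11890, 6246, 9366, 7222, 11281, 11881], [0, 0, 2787, 0, 3864, 0, 6246, 7298, 3864, 0, 6338, 7289], [0, 0, (-64), 2132, 0, 0, 9366, 3864, 9351, 6573, 7733, 9342], [0, 3649, 0, 4207, 0, 2961, 7222, 0, 6573, 9873, 6645, 9864], [0, 187, 0, 0,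 1100, 2894, 11281, 6338, 7733, 6645, 11425, 11416], [0, 7137, 6090, 7621, 7187, 2745, 11881, 7289, 9342, 9864, 11416, 19336]]"

definition theta_primal_gram_X :: "int list list" where
  "theta_primal_gram_X = [[0, 253531, 186829, 239012, 193006, 47710, 0, 0, 0, 129534, 6638, 253354], [0, 0, 141244, 17866, 159326, (-90890), 0, 177587, (-4078), (-171341), (-8781), 52931], [0, 0, 0, 105815, (-33080), (-92420), 66767, (-29985), 182023, 94163, (-13512), 66991], [0, 0, 0, 0, 31725, 69837, 300828, 173047, 210281, 170628, 301683, 301565], [0, 0, 0, 0, 0, 28178, 91439, 45587, 62687, 59692, 92757, 90820], [0, 0, 0, 0, 0, 0, 60478, 32909, 52091, 31798, 52828, 56759], [0, 0, 0, 0, 0, 0, 0, 10170, (-228), (-4221), 2351, 1676], [0, 0, 0, 0, 0, 0, 0, 0, 10608, 3695, 1551, 3498], [0, 0, 0, 0, 0, 0, 0, 0, 0, 9879, 2515, 3211], [0, 0, 0, 0, 0, 0, 0, 0, 0, 0, 7985, 1897], [0, 0, 0, 0, 0, 0, 0, 0, 0, 0, 0, 8390]]"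

(* theta_dual_Y / 100000 is the core block of a dual matrix for the cone over edges_Y: 3.16045 on the
   diagonal and -1 at the non-edges of the core. *)
definition theta_dual_Y :: "int list list" where
  "theta_dual_Y = [[0, 0, 0, 0, 0, 0, 0, 0, 0, 0, 0], [0, 316045, (-100000), (-100000), (-100000), (-73256), (-100000), (-100000), (-100000), 1036, 243202], [0, (-100000), 316045, (-100000), (-100000), 297394, (-100000), 1037, 243201, (-100000), (-100000)], [0, (-100000), (-100000), 316045, (-100000), (-100000), 122996, (-100000), 8291, 71440, (-100000)], [0, (-100000), (-100000), (-100000), 316045, (-100000), 122997, 71439, (-100000), (-100000), 8291], [0, (-73256), 297394, (-100000), (-100000), 316045, (-100000), (-30715), 261831, (-100000), (-100000)], [0, (-100000), (-100000), 122996, 122997, (-100000), 316045, (-100000), (-100000), (-100000), (-100000)], [0, (-100000), 1037, (-100000), 71439, (-30715), (-100000), 316045, (-100000), 206516, (-100000)], [0, (-100000), 243201, 8291, (-100000), 261831, (-100000), (-100000), 316045, (-100000), (-100000)], [0, 1036, (-100000), 71440, (-100000), (-100000), (-100000), 206516, (-100000), 316045, (-100000)], [0, 243202, (-100000), (-100000), 8291, (-100000), (-100000), (-100000), (-100000), (-100000), 316045]]"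

definition theta_dual_gram_Y :: "int list list" where
  "theta_dual_gram_Y = [[0, 1686509, (-533647), (-533647), (-533647), (-390928), (-533647), (-533647), (-533647), 5529, 1297839], [0, 0, 1599855, (-740554), (-740554), 1542596, (-740554), (-172169), 1190127, (-560707), (-129645)], [0, 0, 0, 1418138, (-1222166), 23804, 193045, (-925354), 473292, 162662, (-213957)], [0, 0, 0, 0, 719323, 87375, 708593, (-1251545), 382327, (-1547962), 569572], [0, 0, 0, 0, 0, 551077, (-59430), (-159839), 485058, 178716, (-430651)], [0, 0, 0, 0, 0, 0, 1211698, (-211527), (-525609), (-194923), (-570527)], [0, 0, 0, 0, 0, 0, 0, 192238, (-504907), (-179111), 497344], [0, 0, 0, 0, 0, 0, 0, 0, 80469, 68709, (-117915)], [0, 0, 0, 0, 0, 0, 0, 0, 0, 22561, (-20017)], [0, 0, 0, 0, 0, 0, 0, 0, 0, 0, 17598]]"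

lemma edges_checks:
  "valid_core edges_X" "valid_core edges_Y"
  "no_independent_triple edges_X [1,2,6,7,9]" "no_independent_triple edges_X [3,4,5,8,10]"
  "no_independent_triple edges_Y [1,2,5,8,10]" "no_independent_triple edges_Y [3,4,6,7,9]"
  "list_all (\<lambda>i. i \<in> set [1,2,6,7,9] \<union> set [3,4,5,8,10]) [1..<11]"
  "list_all (\<lambda>i. i \<in> set [1,2,5,8,10] \<union> set [3,4,6,7,9]) [1..<11]"
  "independent_list edges_X [1,2,3,4]" "independent_list edges_Y [1,2,3,4]"
  "proper_core_colouring edges_X [0,0,0,0,0,1,1,2,2,1,1] 3"
  "proper_core_colouring edges_Y [0,0,0,0,0,1,1,2,2,1,1] 3"
  "switching_check [1,2,3,4] edges_X edges_Y" "degree_check [1,2,3,4] edges_X edges_Y"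
  by code_simp+

lemma lovasz_theta_cone_graph_X_ge:
  assumes n: "12 \<le> n"
  shows "516470 / 100000 \<le> lovasz_theta n (cone_graph edges_X n)"
proof -
  have "psd_certificate 12 9000000 theta_primal_X theta_primal_gram_X"
    "list_all (\<lambda>j. entry theta_primal_X 0 j = 0) [0..<12]"
    "list_all (\<lambda>(i,j). entry theta_primal_X i j = 0) edges_X"
    "sum_list (map (\<lambda>i. entry theta_primal_X i i) [0..<12]) = 100000"
    "sum_list (map (\<lambda>i. sum_list (map (\<lambda>j. entry theta_primal_X i j) [0..<12])) [0..<12]) = 516470"
    by code_simp+
  then show ?thesis
    using lovasz_theta_cone_graph_ge[OF n, of 9000000 theta_primal_X theta_primal_gram_X edges_X]
    by (simp add: list_all_iff interv_sum_list_conv_sum_set_nat atLeast0LessThan)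
qed

lemma lovasz_theta_cone_graph_Y_le:
  assumes n: "11 \<le> n"
  shows "lovasz_theta n (cone_graph edges_Y n) \<le> 316045 / 100000 + 2"
proof -
  have "psd_certificate 11 9000000 theta_dual_Y theta_dual_gram_Y"
    "list_all (\<lambda>i. list_all (\<lambda>j. core_edge edges_Y i j \<or> entry theta_dual_Y i j =
        (if i = 0 \<or> j = 0 then 0 else if i = j then 316045 else - 100000)) [0..<11]) [0..<11]"
    by code_simp+
  then show ?thesis
    using lovasz_theta_cone_graph_le[OF n edges_checks(2),
        of 9000000 theta_dual_Y theta_dual_gram_Y 100000 316045]
    by (simp add: list_all_iff)
qed

theorem mainTheorem4:
  fixes n :: nat
  assumes "even n" and "n \<ge> 14"
  shows "\<exists>G H. simple_graph n G \<and> simple_graph n H \<and>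
           connected_graph n G \<and> connected_graph n H \<and>
           irregular n G \<and> irregular n H \<and>
           \<not> isomorphic n G H \<and>
           cospectral (graph_adj_mat n G) (graph_adj_mat n H) \<and>
           cospectral (laplacian n G) (laplacian n H) \<and>
           cospectral (signless_laplacian n G) (signless_laplacian n H) \<and>
           cospectral (normalized_laplacian n G) (normalized_laplacian n H) \<and>
           independence_number n G = independence_number n H \<and>
           clique_number n G = clique_number n H \<and>
           chromatic_number n G = chromatic_number n H \<and>
           lovasz_theta n G \<noteq> lovasz_theta n H"
proof -
  (* The construction works for every n >= 14. *)
  note n = \<open>n \<ge> 14\<close> and checks = edges_checks
  let ?G = "cone_graph edges_X n" and ?H = "cone_graph edges_Y n"
  have theta: "lovasz_theta n ?G \<noteq> lovasz_theta n ?H"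
    using lovasz_theta_cone_graph_X_ge[of n] lovasz_theta_cone_graph_Y_le[of n] n by simp
  then have "\<not> isomorphic n ?G ?H" using isomorphic_lovasz_theta by blast
  moreover have "independence_number n ?G = 5" "independence_number n ?H = 5"
    using n independence_number_cone_graph_eq_5[OF checks(1,3,4,7,9)]
      independence_number_cone_graph_eq_5[OF checks(2,5,6,8,10)] by simp_all
  moreover have "clique_number n ?G = n - 10" "clique_number n ?H = n - 10"
    "chromatic_number n ?G = n - 10" "chromatic_number n ?H = n - 10"
    using n clique_chromatic_number_cone_graph[OF checks(1) checks(11)]
      clique_chromatic_number_cone_graph[OF checks(2) checks(12)] by auto
  moreover have "cospectral (graph_adj_mat n ?G) (graph_adj_mat n ?H)"
    "cospectral (laplacian n ?G) (laplacian n ?H)"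
    "cospectral (signless_laplacian n ?G) (signless_laplacian n ?H)"
    "cospectral (normalized_laplacian n ?G) (normalized_laplacian n ?H)"
    using n by (intro cone_graph_cospectral[OF checks(1,2) _ _ _ checks(13,14)]; simp)+
  ultimately show ?thesis
    using theta n cone_graph_simple cone_graph_connected cone_graph_irregular checks(1,2)
    by (intro exI[of _ ?G] exI[of _ ?H]) auto
qed

end
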